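(* Let $\delta>0$ and $0<c\le2\sqrt\delta$, and set $\tilde\lambda:=1-\frac{c^2}{4\delta}\ge0$. Then $\tilde\lambda$ is an eigenvalue in the extended sense: the Riccati solution $\eta^u(z;\tilde\lambda)$ tending to $\mu^u_-(\tilde\lambda)$ as $z\to-\infty$ tends, as $z\to+\infty$, to the double root $\mu^s_+(\tilde\lambda)=\mu^u_+(\tilde\lambda)=-\frac{c}{2\delta}$. In particular, for $0<c<2\sqrt\delta$ the linearised operator about the travelling wave has the positive real eigenvalue $\tilde\lambda$.
   Context: $\hat u$ solves $\delta\hat u''+c\hat u'+\hat u(1-\hat u)=0$ with $\hat u(-\infty)=1$, $\hat u(+\infty)=0$. Riccati equation: $\eta'=\frac{\lambda-1+2\hat u(z)}{\delta}-\frac c\delta\eta-\eta^2$ on $\mathbb CP^1$ (equation for $\eta=q/p$ along solutions of $p'=q$, $q'=\frac{\lambda-1+2\hat u}{\delta}p-\frac c\delta q$). $\mu^{u}_-(\lambda)=\frac{-c+\sqrt{c^2+4\delta(\lambda+1)}}{2\delta}$, $\mu^{u,s}_+(\lambda)=\frac{-c\pm\sqrt{c^2+4\delta(\lambda-1)}}{2\delta}$. For $\mathrm{Re}\,\lambda\ge0$, $\lambda$ is an eigenvalue in the extended sense if some solution of the Riccati equation tends to $\mu^u_-(\lambda)$ as $z\to-\infty$ and to $\mu^s_+(\lambda)$ as $z\to+\infty$. *)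

theory Defs
  imports "HOL-Analysis.Analysis"
begin

definition travelling_wave :: "real \<Rightarrow> real \<Rightarrow> (real \<Rightarrow> real) \<Rightarrow> bool" where
  "travelling_wave \<delta> c u \<longleftrightarrow>
     (\<exists>u'. (\<forall>z. (u has_real_derivative u' z) (at z)) \<and>
           (\<forall>z. (u' has_real_derivative (- (c * u' z + u z * (1 - u z)) / \<delta>)) (at z))) \<and>
     (u \<longlongrightarrow> 1) at_bot \<and> (u \<longlongrightarrow> 0) at_top"

definition mu_u_minus :: "real \<Rightarrow> real \<Rightarrow> complex \<Rightarrow> complex" where
  "mu_u_minus \<delta> c lam = (- c + csqrt (c\<^sup>2 + 4 * \<delta> * (lam + 1))) / (2 * \<delta>)"

definition mu_u_plus :: "real \<Rightarrow> real \<Rightarrow> complex \<Rightarrow> complex" where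
  "mu_u_plus \<delta> c lam = (- c + csqrt (c\<^sup>2 + 4 * \<delta> * (lam - 1))) / (2 * \<delta>)"

definition mu_s_plus :: "real \<Rightarrow> real \<Rightarrow> complex \<Rightarrow> complex" where
  "mu_s_plus \<delta> c lam = (- c - csqrt (c\<^sup>2 + 4 * \<delta> * (lam - 1))) / (2 * \<delta>)"

text \<open>A solution of the Riccati equation on CP^1 is the projectivisation eta = q/p of a
  nonzero solution (p,q) of the linear system p' = q, q' = ((lambda-1+2u)/delta) p - (c/delta) q.\<close>
definition riccati_solution ::
    "real \<Rightarrow> real \<Rightarrow> (real \<Rightarrow> real) \<Rightarrow> complex \<Rightarrow> (real \<Rightarrow> complex) \<Rightarrow> (real \<Rightarrow> complex) \<Rightarrow> bool" where
  "riccati_solution \<delta> c u lam p q \<longleftrightarrow>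
     (\<forall>z. (p has_vector_derivative q z) (at z)) \<and>
     (\<forall>z. (q has_vector_derivative
            ((lam - 1 + 2 * u z) / \<delta> * p z - c / \<delta> * q z)) (at z)) \<and>
     (\<forall>z. p z \<noteq> 0 \<or> q z \<noteq> 0)"

definition proj_tendsto :: "(real \<Rightarrow> complex) \<Rightarrow> (real \<Rightarrow> complex) \<Rightarrow> complex \<Rightarrow> real filter \<Rightarrow> bool" where
  "proj_tendsto p q \<mu> F \<longleftrightarrow> (\<forall>\<^sub>F z in F. p z \<noteq> 0) \<and> ((\<lambda>z. q z / p z) \<longlongrightarrow> \<mu>) F"

definition eigenvalue_ext :: "real \<Rightarrow> real \<Rightarrow> (real \<Rightarrow> real) \<Rightarrow> complex \<Rightarrow> bool" where
  "eigenvalue_ext \<delta> c u lam \<longleftrightarrow> Re lam \<ge> 0 \<and>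
     (\<exists>p q. riccati_solution \<delta> c u lam p q \<and>
            proj_tendsto p q (mu_u_minus \<delta> c lam) at_bot \<and>
            proj_tendsto p q (mu_s_plus \<delta> c lam) at_top)"

end

theory Submission
  imports Defs "HOL-Real_Asymp.Real_Asymp"
begin

text \<open>
  At \<open>\<lambda> = 1 - c\<^sup>2/(4\<delta>)\<close> the exponents \<open>\<mu>\<^sup>u\<^sub>+\<close> and \<open>\<mu>\<^sup>s\<^sub>+\<close> coincide at \<open>-k\<close>,
  \<open>k = c/(2\<delta>)\<close>, and the substitution \<open>w = e\<^sup>k\<^sup>z p\<close> removes the damping from the linear
  system behind the Riccati equation: it becomes \<open>w'' = V w\<close> with \<open>V = 2u/\<delta>\<close>.
  At \<open>-\<infinity>\<close> the potential tends to \<open>2/\<delta> > 0\<close>, and a shooting argument for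
  \<open>\<eta>' = V - \<eta>\<^sup>2\<close> yields a solution with \<open>w'/w \<rightarrow> \<surd>(2/\<delta>)\<close>, i.e. \<open>q/p \<rightarrow> \<mu>\<^sup>u\<^sub>-\<close>.
  At \<open>+\<infinity>\<close> a Lyapunov function shows that the wave decays exponentially, so every
  nonzero solution of \<open>w'' = V w\<close> is asymptotically affine, \<open>w \<sim> A + B z\<close> with
  \<open>(A, B) \<noteq> 0\<close>. Hence \<open>w'/w \<rightarrow> 0\<close>, and every Riccati solution satisfies
  \<open>q/p \<rightarrow> -k = \<mu>\<^sup>s\<^sub>+\<close>.
\<close>

section \<open>Comparison principles on the real line\<close>

lemma abs_diff_le_of_abs_deriv_le:
  fixes f g f' g' :: "real \<Rightarrow> real"
  assumes "a \<le> b"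
    and df: "\<And>x. x \<in> {a..b} \<Longrightarrow> (f has_real_derivative f' x) (at x)"
    and dg: "\<And>x. x \<in> {a..b} \<Longrightarrow> (g has_real_derivative g' x) (at x)"
    and le: "\<And>x. x \<in> {a..b} \<Longrightarrow> \<bar>f' x\<bar> \<le> g' x"
  shows "\<bar>f b - f a\<bar> \<le> g b - g a"
proof -
  have l2: "0 \<le> g' x + f' x" "0 \<le> g' x - f' x" if "x \<in> {a..b}" for x using le[OF that] by auto
  have "(\<lambda>x. g x - f x) a \<le> (\<lambda>x. g x - f x) b"
    by (rule deriv_nonneg_imp_mono[where g="\<lambda>x. g x - f x" and g'="\<lambda>x. g' x - f' x"])
       (use df dg l2 assms(1) in \<open>auto intro!: DERIV_diff\<close>)
  moreover have "(\<lambda>x. g x + f x) a \<le> (\<lambda>x. g x + f x) b"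
    by (rule deriv_nonneg_imp_mono[where g="\<lambda>x. g x + f x" and g'="\<lambda>x. g' x + f' x"])
       (use df dg l2 assms(1) in \<open>auto intro!: DERIV_add\<close>)
  ultimately show ?thesis by auto
qed

lemma tendsto_at_top_of_mono_bounded:
  fixes P :: "real \<Rightarrow> real"
  assumes mono: "\<And>x y. a \<le> x \<Longrightarrow> x \<le> y \<Longrightarrow> P x \<le> P y"
    and bd: "\<And>x. a \<le> x \<Longrightarrow> P x \<le> U"
  shows "\<exists>L. (P \<longlongrightarrow> L) at_top"
proof -
  have bdd: "bdd_above (P ` {a..})" using bd by (auto simp: bdd_above_def)
  let ?S = "Sup (P ` {a..})"
  have "(P \<longlongrightarrow> ?S) at_top"
  proof (rule increasing_tendsto)
    show "\<forall>\<^sub>F n in at_top. P n \<le> ?S"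
      using bdd by (auto intro!: cSUP_upper simp: eventually_at_top_linorder)
    fix x assume "x < ?S"
    then obtain y where y: "y \<in> {a..}" "x < P y" using less_cSUP_iff[OF _ bdd] by auto
    show "\<forall>\<^sub>F n in at_top. x < P n"
      unfolding eventually_at_top_linorder
      by (rule exI[of _ y]) (use y mono in \<open>fastforce\<close>)
  qed
  then show ?thesis by blast
qed

lemma tendsto_at_top_of_abs_deriv_le:
  fixes f g f' g' :: "real \<Rightarrow> real"
  assumes df: "\<And>x. x \<ge> a \<Longrightarrow> (f has_real_derivative f' x) (at x)"
    and dg: "\<And>x. x \<ge> a \<Longrightarrow> (g has_real_derivative g' x) (at x)"
    and le: "\<And>x. x \<ge> a \<Longrightarrow> \<bar>f' x\<bar> \<le> g' x"
    and lim: "(g \<longlongrightarrow> Lg) at_top"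
  shows "\<exists>Lf. (f \<longlongrightarrow> Lf) at_top \<and> (\<forall>x\<ge>a. \<bar>Lf - f x\<bar> \<le> Lg - g x)"
proof -
  have cmp: "\<bar>f y - f x\<bar> \<le> g y - g x" if "a \<le> x" "x \<le> y" for x y
    by (rule abs_diff_le_of_abs_deriv_le[OF that(2), where f'=f' and g'=g']) (use that df dg le in auto)
  have gle: "g x \<le> Lg" if "a \<le> x" for x
  proof (rule tendsto_lowerbound[OF lim])
    show "\<forall>\<^sub>F i in at_top. g x \<le> g i"
      unfolding eventually_at_top_linorder
      by (rule exI[of _ x]) (use cmp that in fastforce)
  qed simp
  have "\<exists>L. ((\<lambda>x. g x + f x) \<longlongrightarrow> L) at_top"
  proof (rule tendsto_at_top_of_mono_bounded[where a=a and U="2*Lg + f a - g a"])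
    show "g x + f x \<le> g y + f y" if "a \<le> x" "x \<le> y" for x y using cmp[OF that] by auto
    show "g x + f x \<le> 2*Lg + f a - g a" if "a \<le> x" for x
      using cmp[OF order.refl that] gle[OF that] gle[OF order.refl] by auto
  qed
  then obtain Lp where Lp: "((\<lambda>x. g x + f x) \<longlongrightarrow> Lp) at_top" by blast
  have "\<exists>L. ((\<lambda>x. g x - f x) \<longlongrightarrow> L) at_top"
  proof (rule tendsto_at_top_of_mono_bounded[where a=a and U="2*Lg - f a - g a"])
    show "g x - f x \<le> g y - f y" if "a \<le> x" "x \<le> y" for x y using cmp[OF that] by auto
    show "g x - f x \<le> 2*Lg - f a - g a" if "a \<le> x" for x
      using cmp[OF order.refl that] gle[OF that] gle[OF order.refl] by auto
  qed
  then obtain Lm where Lm: "((\<lambda>x. g x - f x) \<longlongrightarrow> Lm) at_top" by blast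
  have fl: "(f \<longlongrightarrow> (Lp - Lm)/2) at_top"
  proof -
    have "((\<lambda>x. ((g x + f x) - (g x - f x)) * (1/2)) \<longlongrightarrow> (Lp - Lm) * (1/2)) at_top"
      using tendsto_mult[OF tendsto_diff[OF Lp Lm] tendsto_const] by blast
    then show ?thesis by simp
  qed
  moreover have "\<bar>(Lp - Lm)/2 - f x\<bar> \<le> Lg - g x" if "a \<le> x" for x
  proof (rule tendsto_le[OF _ _ _ ])
    show "((\<lambda>y. g y - g x) \<longlongrightarrow> Lg - g x) at_top" by (intro tendsto_intros lim)
    show "((\<lambda>y. \<bar>f y - f x\<bar>) \<longlongrightarrow> \<bar>(Lp - Lm)/2 - f x\<bar>) at_top" by (intro tendsto_intros fl)
    show "\<forall>\<^sub>F y in at_top. \<bar>f y - f x\<bar> \<le> g y - g x"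
      unfolding eventually_at_top_linorder by (rule exI[of _ x]) (use cmp that in auto)
  qed simp
  ultimately show ?thesis by blast
qed

lemma abs_le_of_tendsto_0_abs_deriv_le:
  fixes f g f' g' :: "real \<Rightarrow> real"
  assumes "\<And>x. x \<ge> a \<Longrightarrow> (f has_real_derivative f' x) (at x)"
    and "\<And>x. x \<ge> a \<Longrightarrow> (g has_real_derivative g' x) (at x)"
    and "\<And>x. x \<ge> a \<Longrightarrow> \<bar>f' x\<bar> \<le> g' x"
    and f0: "(f \<longlongrightarrow> 0) at_top" and g0: "(g \<longlongrightarrow> 0) at_top" and "x \<ge> a"
  shows "\<bar>f x\<bar> \<le> - g x"
proof -
  obtain L where "(f \<longlongrightarrow> L) at_top" "\<forall>x\<ge>a. \<bar>L - f x\<bar> \<le> 0 - g x"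
    using tendsto_at_top_of_abs_deriv_le[OF assms(1-3) g0] by blast
  moreover have "L = 0" using tendsto_unique[OF _ \<open>(f \<longlongrightarrow> L) at_top\<close> f0] by simp
  ultimately show ?thesis using \<open>x \<ge> a\<close> by simp
qed

lemma pos_of_deriv_neg_at_zeros:
  fixes \<phi> :: "real \<Rightarrow> real"
  assumes "z \<le> y" and cont: "continuous_on {z..y} \<phi>"
    and der: "\<And>t. t \<in> {z..y} \<Longrightarrow> \<phi> t = 0 \<Longrightarrow> \<exists>d<0. (\<phi> has_real_derivative d) (at t)"
    and pos: "\<phi> y > 0"
  shows "\<phi> z > 0"
proof (rule ccontr)
  assume neg: "\<not> \<phi> z > 0"
  define A where "A = {s \<in> {z..y}. \<phi> s \<le> 0}"
  have zA: "z \<in> A" using neg \<open>z \<le> y\<close> by (auto simp: A_def)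
  have clA: "closed A" unfolding A_def
    by (rule continuous_on_closed_Collect_le[OF cont]) auto
  have bdA: "bdd_above A" by (auto simp: A_def intro: bdd_aboveI2)
  define t where "t = Sup A"
  have tA: "t \<in> A" unfolding t_def using closed_contains_Sup zA bdA clA by blast
  have up: "s \<le> t" if "s \<in> A" for s using cSup_upper[OF that bdA] t_def by simp
  have tz: "z \<le> t" "t \<le> y" "\<phi> t \<le> 0" using tA by (auto simp: A_def)
  have "t < y" using tz pos by (metis order.not_eq_order_implies_strict not_less)
  have "\<phi> t = 0"
  proof (rule ccontr)
    assume "\<phi> t \<noteq> 0"
    then have "\<phi> t \<le> 0" "0 \<le> \<phi> y" using tz pos by auto
    have c2: "continuous_on {t..y} \<phi>" using continuous_on_subset[OF cont, of "{t..y}"] tz by auto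
    obtain s where s: "t \<le> s" "s \<le> y" "\<phi> s = 0"
      using IVT'[of \<phi> t 0 y, OF \<open>\<phi> t \<le> 0\<close> \<open>0 \<le> \<phi> y\<close> \<open>t \<le> y\<close> c2] by blast
    then have "s \<in> A" using tz by (auto simp: A_def)
    moreover have "s \<noteq> t" using s \<open>\<phi> t \<noteq> 0\<close> by auto
    ultimately show False using up s by fastforce
  qed
  then obtain d where d: "d < 0" "(\<phi> has_real_derivative d) (at t)" using der tz by auto
  from DERIV_neg_dec_right[OF d(2) d(1)] obtain e where e: "e > 0" "\<And>h. h > 0 \<Longrightarrow> h < e \<Longrightarrow> \<phi> t > \<phi> (t + h)"
    by auto
  define h where "h = min (e/2) (y - t)"
  have h: "h > 0" "h < e" "t + h \<le> y" using e \<open>t < y\<close> by (auto simp: h_def)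
  have "\<phi> (t + h) < 0" using e(2)[OF h(1,2)] \<open>\<phi> t = 0\<close> by simp
  then have "t + h \<in> A" using h tz by (auto simp: A_def)
  then show False using up h by fastforce
qed

section \<open>Existence for \<open>w'' = V w\<close> by Picard iteration\<close>

definition antideriv :: "real \<Rightarrow> (real \<Rightarrow> real) \<Rightarrow> real \<Rightarrow> real" where
  "antideriv z0 f = (SOME F. F z0 = 0 \<and> (\<forall>x. (F has_real_derivative f x) (at x)))"

lemma antideriv:
  assumes "continuous_on UNIV f"
  shows "antideriv z0 f z0 = 0" and "(antideriv z0 f has_real_derivative f x) (at x)"
proof -
  obtain F where F: "\<And>x::real. (F has_vector_derivative f x) (at x)"
    using einterval_antiderivative[of "-\<infinity>" "\<infinity>" f] assms
    by (auto simp: continuous_on_eq_continuous_at)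
  have "\<forall>x. ((\<lambda>x. F x - F z0) has_real_derivative f x) (at x)"
    using F by (auto simp: has_real_derivative_iff_has_vector_derivative intro!: derivative_eq_intros)
  then have "\<exists>G. G z0 = 0 \<and> (\<forall>x. (G has_real_derivative f x) (at x))"
    by (intro exI[of _ "\<lambda>x. F x - F z0"]) auto
  then have "antideriv z0 f z0 = 0 \<and> (\<forall>x. (antideriv z0 f has_real_derivative f x) (at x))"
    unfolding antideriv_def by (rule someI_ex)
  then show "antideriv z0 f z0 = 0" and "(antideriv z0 f has_real_derivative f x) (at x)"
    by auto
qed

lemma abs_le_of_abs_deriv_le_power:
  fixes f f' :: "real \<Rightarrow> real"
  assumes df: "\<And>x. (f has_real_derivative f' x) (at x)" and f0: "f z0 = 0"
    and K: "K \<ge> 0"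
    and bd: "\<And>s. \<bar>s - z0\<bar> \<le> \<bar>z - z0\<bar> \<Longrightarrow> \<bar>f' s\<bar> \<le> K * \<bar>s - z0\<bar>^n"
  shows "\<bar>f z\<bar> \<le> K * \<bar>z - z0\<bar>^(Suc n) / Suc n"
proof (cases "z0 \<le> z")
  case True
  have "\<bar>f z - f z0\<bar> \<le> K * (z - z0)^(Suc n) / Suc n - K * (z0 - z0)^(Suc n) / Suc n"
  proof (rule abs_diff_le_of_abs_deriv_le[OF True, where f'=f' and g'="\<lambda>s. K * (s - z0)^n"])
    show "((\<lambda>s. K * (s - z0)^(Suc n) / Suc n) has_real_derivative K * (x - z0)^n) (at x)" for x
    proof -
      have "((\<lambda>s. s - z0) has_real_derivative 1) (at x)" by (auto intro!: derivative_eq_intros)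
      from DERIV_cdivide[OF DERIV_cmult[OF DERIV_power[OF this, of "Suc n"], of K], of "Suc n"]
      show ?thesis by (simp del: of_nat_Suc)
    qed
    show "\<bar>f' x\<bar> \<le> K * (x - z0)^n" if "x \<in> {z0..z}" for x using bd[of x] that by auto
  qed (use df in auto)
  then show ?thesis using f0 True by simp
next
  case False
  have "\<bar>f z0 - f z\<bar> \<le> - K * (z0 - z0)^(Suc n) / Suc n - (- K * (z0 - z)^(Suc n) / Suc n)"
  proof (rule abs_diff_le_of_abs_deriv_le[where f'=f' and g'="\<lambda>s. K * (z0 - s)^n"])
    show "((\<lambda>s. - K * (z0 - s)^(Suc n) / Suc n) has_real_derivative K * (z0 - x)^n) (at x)" for x
    proof -
      have "((\<lambda>s. z0 - s) has_real_derivative -1) (at x)" by (auto intro!: derivative_eq_intros)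
      from DERIV_cdivide[OF DERIV_cmult[OF DERIV_power[OF this, of "Suc n"], of "-K"], of "Suc n"]
      show ?thesis by (simp del: of_nat_Suc)
    qed
    show "\<bar>f' x\<bar> \<le> K * (z0 - x)^n" if "x \<in> {z..z0}" for x using bd[of x] that by auto
  qed (use df False in auto)
  then show ?thesis using f0 False by simp
qed

primrec picard :: "(real \<Rightarrow> real) \<Rightarrow> real \<Rightarrow> real \<Rightarrow> real \<Rightarrow> nat \<Rightarrow> (real \<Rightarrow> real) \<times> (real \<Rightarrow> real)" where
  "picard V z0 a b 0 = (\<lambda>_. a, \<lambda>_. b)"
| "picard V z0 a b (Suc n) = (\<lambda>z. a + antideriv z0 (snd (picard V z0 a b n)) z,
                              \<lambda>z. b + antideriv z0 (\<lambda>s. V s * fst (picard V z0 a b n) s) z)"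

lemma picard_props:
  assumes V: "continuous_on UNIV V"
  shows "continuous_on UNIV (fst (picard V z0 a b n)) \<and> continuous_on UNIV (snd (picard V z0 a b n))
    \<and> fst (picard V z0 a b n) z0 = a \<and> snd (picard V z0 a b n) z0 = b
    \<and> (\<forall>x. (fst (picard V z0 a b (Suc n)) has_real_derivative snd (picard V z0 a b n) x) (at x))
    \<and> (\<forall>x. (snd (picard V z0 a b (Suc n)) has_real_derivative V x * fst (picard V z0 a b n) x) (at x))"
proof (induction n)
  case 0
  have "continuous_on UNIV (\<lambda>s. V s * a)" using V by (intro continuous_intros)
  then show ?case using antideriv[of "\<lambda>_. b"] antideriv[of "\<lambda>s. V s * a"]
    by (auto intro!: derivative_eq_intros)
next
  case (Suc n)
  let ?w = "fst (picard V z0 a b (Suc n))" and ?v = "snd (picard V z0 a b (Suc n))"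
  have cont: "continuous_on UNIV ?w" "continuous_on UNIV ?v"
    using Suc by (auto intro!: DERIV_continuous continuous_at_imp_continuous_on)
  then have "continuous_on UNIV (\<lambda>s. V s * ?w s)" using V by (intro continuous_intros)
  moreover have "continuous_on UNIV (\<lambda>s. V s * fst (picard V z0 a b n) s)"
    using V Suc by (intro continuous_intros) auto
  ultimately show ?case
    using cont Suc antideriv[of ?v] antideriv[of "\<lambda>s. V s * ?w s"]
      antideriv[of "snd (picard V z0 a b n)"] antideriv[of "\<lambda>s. V s * fst (picard V z0 a b n) s"]
    by (simp only: picard.simps(2)[of V z0 a b "Suc n"] fst_conv snd_conv)
       (auto intro!: derivative_eq_intros)
qed

lemma picard_continuous:
  assumes "continuous_on UNIV V"
  shows "continuous_on S (fst (picard V z0 a b n))"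
  using picard_props[OF assms] continuous_on_subset subset_UNIV by metis

lemma picard_initial:
  assumes "continuous_on UNIV V"
  shows "fst (picard V z0 a b n) z0 = a" and "snd (picard V z0 a b n) z0 = b"
  using picard_props[OF assms] by blast+

lemma picard_has_derivative:
  assumes "continuous_on UNIV V"
  shows "(fst (picard V z0 a b (Suc n)) has_real_derivative snd (picard V z0 a b n) x) (at x)"
    and "(snd (picard V z0 a b (Suc n)) has_real_derivative V x * fst (picard V z0 a b n) x) (at x)"
  using picard_props[OF assms] by blast+

lemma picard_increment_bound:
  fixes a b M R z s :: real
  assumes V: "continuous_on UNIV V" and M: "M \<ge> 1"
    and Vb: "\<And>s. \<bar>s - z\<bar> \<le> R \<Longrightarrow> \<bar>V s\<bar> \<le> M" and s: "\<bar>s - z\<bar> \<le> R"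
  defines "E n y \<equiv> (\<bar>a\<bar> + \<bar>b\<bar>) * M^(Suc n) * \<bar>y - z\<bar>^(Suc n) / fact (Suc n)"
  shows "\<bar>fst (picard V z a b (Suc n)) s - fst (picard V z a b n) s\<bar> \<le> E n s
    \<and> \<bar>snd (picard V z a b (Suc n)) s - snd (picard V z a b n) s\<bar> \<le> E n s"
  using s
proof (induction n arbitrary: s)
  case 0
  have C: "\<bar>b\<bar> \<le> (\<bar>a\<bar> + \<bar>b\<bar>) * M" "\<bar>a\<bar> \<le> (\<bar>a\<bar> + \<bar>b\<bar>) * M"
    using mult_left_mono[OF M, of "\<bar>a\<bar> + \<bar>b\<bar>"] by auto
  have "\<bar>fst (picard V z a b (Suc 0)) s - fst (picard V z a b (Suc 0)) z\<bar>
      \<le> ((\<bar>a\<bar> + \<bar>b\<bar>) * M) * \<bar>s - z\<bar>^(Suc 0) / Suc 0"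
    by (rule abs_le_of_abs_deriv_le_power[where f'="\<lambda>_. b"])
       (use C M picard_has_derivative(1)[OF V, of z a b 0] in \<open>auto intro!: derivative_eq_intros simp del: picard.simps(2)\<close>)
  moreover have "\<bar>snd (picard V z a b (Suc 0)) s - snd (picard V z a b (Suc 0)) z\<bar>
      \<le> ((\<bar>a\<bar> + \<bar>b\<bar>) * M) * \<bar>s - z\<bar>^(Suc 0) / Suc 0"
  proof (rule abs_le_of_abs_deriv_le_power[where f'="\<lambda>x. V x * a"])
    show "\<bar>V x * a\<bar> \<le> (\<bar>a\<bar> + \<bar>b\<bar>) * M * \<bar>x - z\<bar>^0" if "\<bar>x - z\<bar> \<le> \<bar>s - z\<bar>" for x
    proof -
      have "\<bar>V x\<bar> * \<bar>a\<bar> \<le> M * (\<bar>a\<bar> + \<bar>b\<bar>)" using Vb[of x] that 0 M by (intro mult_mono) auto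
      then show ?thesis by (simp add: abs_mult mult.commute)
    qed
  qed (use M picard_has_derivative(2)[OF V, of z a b 0]
       in \<open>auto intro!: derivative_eq_intros simp del: picard.simps(2)\<close>)
  ultimately show ?case using picard_initial[OF V, of z a b "Suc 0"] by (simp add: E_def mult.commute)
next
  case (Suc n)
  define K where "K = (\<bar>a\<bar> + \<bar>b\<bar>) * M^(Suc n) / fact (Suc n)"
  have K: "K \<ge> 0" using M by (simp add: K_def)
  have EK: "E n x = K * \<bar>x - z\<bar>^(Suc n)" for x by (simp add: E_def K_def)
  have "\<bar>fst (picard V z a b (Suc (Suc n))) s - fst (picard V z a b (Suc n)) s\<bar>
      \<le> K * \<bar>s - z\<bar>^(Suc (Suc n)) / Suc (Suc n)"
    by (rule abs_le_of_abs_deriv_le_power[where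
          f'="\<lambda>x. snd (picard V z a b (Suc n)) x - snd (picard V z a b n) x"])
       (use K Suc EK picard_has_derivative[OF V] picard_initial[OF V]
        in \<open>auto intro!: derivative_eq_intros simp del: picard.simps\<close>)
  also have "\<dots> \<le> E (Suc n) s"
  proof -
    have "K * \<bar>s - z\<bar>^(Suc (Suc n)) / Suc (Suc n)
        = (\<bar>a\<bar> + \<bar>b\<bar>) * M^(Suc n) * \<bar>s - z\<bar>^(Suc (Suc n)) / fact (Suc (Suc n))"
      by (simp add: K_def fact_Suc field_simps del: of_nat_Suc)
    also have "\<dots> \<le> E (Suc n) s" unfolding E_def using M
      by (intro divide_right_mono mult_right_mono mult_left_mono) (auto simp: power_increasing)
    finally show ?thesis .
  qed
  finally have fst_bound: "\<bar>fst (picard V z a b (Suc (Suc n))) s - fst (picard V z a b (Suc n)) s\<bar>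
      \<le> E (Suc n) s" .
  have "\<bar>snd (picard V z a b (Suc (Suc n))) s - snd (picard V z a b (Suc n)) s\<bar>
      \<le> (M * K) * \<bar>s - z\<bar>^(Suc (Suc n)) / Suc (Suc n)"
  proof (rule abs_le_of_abs_deriv_le_power[where
        f'="\<lambda>x. V x * (fst (picard V z a b (Suc n)) x - fst (picard V z a b n) x)"])
    show "\<bar>V x * (fst (picard V z a b (Suc n)) x - fst (picard V z a b n) x)\<bar>
        \<le> M * K * \<bar>x - z\<bar>^(Suc n)" if "\<bar>x - z\<bar> \<le> \<bar>s - z\<bar>" for x
      using Vb[of x] Suc.IH[of x] that Suc.prems EK[of x] unfolding abs_mult mult.assoc
      by (intro mult_mono) auto
  qed (use K M picard_has_derivative[OF V] picard_initial[OF V]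
       in \<open>auto intro!: derivative_eq_intros simp: algebra_simps simp del: picard.simps\<close>)
  also have "\<dots> = E (Suc n) s"
    by (simp add: E_def K_def fact_Suc field_simps del: of_nat_Suc)
  finally show ?case using fst_bound by blast
qed

lemma uniform_limit_of_summable_increments:
  fixes f :: "nat \<Rightarrow> real \<Rightarrow> real"
  assumes bd: "\<And>n x. x \<in> S \<Longrightarrow> \<bar>f (Suc n) x - f n x\<bar> \<le> B n" and sm: "summable B"
  shows "uniform_limit S f (\<lambda>x. lim (\<lambda>n. f n x)) sequentially"
proof -
  have U: "uniform_limit S (\<lambda>N x. \<Sum>i<N. (f (Suc i) x - f i x)) (\<lambda>x. suminf (\<lambda>i. f (Suc i) x - f i x)) sequentially"
    by (rule Weierstrass_m_test[OF _ sm]) (use bd in auto)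
  have tel: "(\<Sum>i<n. f (Suc i) x - f i x) = f n x - f 0 x" for n x by (induction n) auto
  let ?L = "\<lambda>x. suminf (\<lambda>i. f (Suc i) x - f i x) + f 0 x"
  have U2: "uniform_limit S f ?L sequentially"
  proof (rule uniform_limitI)
    fix e :: real assume "e > 0"
    from uniform_limitD[OF U this]
    show "\<forall>\<^sub>F n in sequentially. \<forall>x\<in>S. dist (f n x) (?L x) < e"
      by eventually_elim (auto simp: tel dist_real_def)
  qed
  have "lim (\<lambda>n. f n x) = ?L x" if "x \<in> S" for x
    using tendsto_uniform_limitI[OF U2 that] by (rule limI)
  then show ?thesis using U2 uniform_limit_cong'[of S f f "\<lambda>x. lim (\<lambda>n. f n x)" ?L] by auto
qed

lemma has_real_derivative_of_uniform_limit:
  fixes f f' :: "nat \<Rightarrow> real \<Rightarrow> real"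
  assumes lim: "uniform_limit {a..b} f g sequentially"
    and lim': "uniform_limit {a..b} f' g' sequentially"
    and der: "\<And>n x. (f n has_real_derivative f' n x) (at x)"
    and x: "a < x" "x < b"
  shows "(g has_real_derivative g' x) (at x)"
proof -
  have "\<exists>h. \<forall>y\<in>{a..b}. (\<lambda>n. f n y) \<longlonglongrightarrow> h y \<and> (h has_derivative (*) (g' y)) (at y within {a..b})"
  proof (rule has_derivative_sequence[OF convex_box(1)[of a b, unfolded box_real]])
    show "(f n has_derivative (*) (f' n y)) (at y within {a..b})" for n y
      using der by (auto simp: has_field_derivative_def intro: has_derivative_at_withinI)
    show "\<forall>\<^sub>F n in sequentially. \<forall>y\<in>{a..b}. \<forall>h. norm (f' n y * h - g' y * h) \<le> e * norm h"
      if "e > 0" for e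
      using uniform_limitD[OF lim' that]
    proof eventually_elim
      case (elim n)
      show ?case
      proof (intro ballI allI)
        fix y h assume "y \<in> {a..b}"
        then have "\<bar>f' n y - g' y\<bar> \<le> e" using elim by (fastforce simp: dist_real_def)
        then have "\<bar>f' n y - g' y\<bar> * \<bar>h\<bar> \<le> e * \<bar>h\<bar>" by (rule mult_right_mono) simp
        then show "norm (f' n y * h - g' y * h) \<le> e * norm h"
          by (simp add: left_diff_distrib[symmetric] abs_mult)
      qed
    qed
    show "(\<lambda>n. f n x) \<longlonglongrightarrow> g x" using tendsto_uniform_limitI[OF lim] x by auto
  qed (use x in auto)
  then obtain h where h: "\<forall>y\<in>{a..b}. (\<lambda>n. f n y) \<longlonglongrightarrow> h y \<and> (h has_derivative (*) (g' y)) (at y within {a..b})"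
    by blast
  have hder: "(h has_real_derivative g' x) (at x)"
    using bspec[OF h, of x] x by (simp add: at_within_Icc_at has_field_derivative_def mult.commute)
  have hg: "h y = g y" if "y \<in> {a<..<b}" for y
  proof -
    have "y \<in> {a..b}" using that by auto
    then show ?thesis using h tendsto_uniform_limitI[OF lim] LIMSEQ_unique by blast
  qed
  show ?thesis
    using has_field_derivative_transform_within_open[OF hder open_greaterThanLessThan _ hg] x by simp
qed

lemma picard_uniform_limit:
  assumes V: "continuous_on UNIV V"
  shows "uniform_limit {z0-R..z0+R} (\<lambda>n. fst (picard V z0 a b n))
      (\<lambda>x. lim (\<lambda>n. fst (picard V z0 a b n) x)) sequentially"
    and "uniform_limit {z0-R..z0+R} (\<lambda>n. snd (picard V z0 a b n))
      (\<lambda>x. lim (\<lambda>n. snd (picard V z0 a b n) x)) sequentially"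
proof -
  define S where "S = {z0-R..z0+R}"
  have S: "\<And>s. s \<in> S \<longleftrightarrow> \<bar>s - z0\<bar> \<le> R" by (auto simp: S_def abs_le_iff)
  have "bounded (V ` S)"
    using compact_continuous_image[OF continuous_on_subset[OF V]] compact_imp_bounded
    by (auto simp: S_def)
  then obtain M0 where M0: "\<And>s. s \<in> S \<Longrightarrow> \<bar>V s\<bar> \<le> M0" by (auto simp: bounded_iff)
  define M where "M = max 1 M0"
  have M: "M \<ge> 1" "\<And>s. \<bar>s - z0\<bar> \<le> R \<Longrightarrow> \<bar>V s\<bar> \<le> M"
    using M0 S by (auto simp: M_def intro: order.trans[OF _ max.cobounded2])
  define B where "B n = (\<bar>a\<bar> + \<bar>b\<bar>) * (M * R)^(Suc n) / fact (Suc n)" for n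
  have incr: "\<bar>fst (picard V z0 a b (Suc n)) s - fst (picard V z0 a b n) s\<bar> \<le> B n
      \<and> \<bar>snd (picard V z0 a b (Suc n)) s - snd (picard V z0 a b n) s\<bar> \<le> B n" if "s \<in> S" for n s
  proof -
    have s: "\<bar>s - z0\<bar> \<le> R" using that S by blast
    then have "\<bar>s - z0\<bar>^(Suc n) \<le> R^(Suc n)" by (intro power_mono) auto
    then have "(\<bar>a\<bar> + \<bar>b\<bar>) * M^(Suc n) * \<bar>s - z0\<bar>^(Suc n) \<le> (\<bar>a\<bar> + \<bar>b\<bar>) * M^(Suc n) * R^(Suc n)"
      using M by (intro mult_left_mono) auto
    then have "(\<bar>a\<bar> + \<bar>b\<bar>) * M^(Suc n) * \<bar>s - z0\<bar>^(Suc n) / fact (Suc n) \<le> B n"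
      unfolding B_def power_mult_distrib mult.assoc by (intro divide_right_mono) auto
    then show ?thesis
      using picard_increment_bound[OF V M(1), where R=R and z=z0 and s=s and n=n and a=a and b=b] M(2) s
      by (auto simp del: picard.simps)
  qed
  have "summable (\<lambda>n. (M * R)^(Suc n) / fact (Suc n))"
    using summable_exp[of "M * R"] by (subst summable_Suc_iff) (simp add: divide_inverse mult.commute)
  then have "summable B" unfolding B_def times_divide_eq_right[symmetric] by (rule summable_mult)
  then show "uniform_limit {z0-R..z0+R} (\<lambda>n. fst (picard V z0 a b n))
      (\<lambda>x. lim (\<lambda>n. fst (picard V z0 a b n) x)) sequentially"
    and "uniform_limit {z0-R..z0+R} (\<lambda>n. snd (picard V z0 a b n))
      (\<lambda>x. lim (\<lambda>n. snd (picard V z0 a b n) x)) sequentially"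
    using incr unfolding S_def by (auto intro!: uniform_limit_of_summable_increments[where B=B])
qed

lemma linear_ode2_exists:
  assumes V: "continuous_on UNIV V"
  shows "\<exists>w v. w z0 = a \<and> v z0 = b \<and> (\<forall>x. (w has_real_derivative v x) (at x))
     \<and> (\<forall>x. (v has_real_derivative V x * w x) (at x))"
proof -
  define w where "w = (\<lambda>x. lim (\<lambda>n. fst (picard V z0 a b n) x))"
  define v where "v = (\<lambda>x. lim (\<lambda>n. snd (picard V z0 a b n) x))"
  have "(w has_real_derivative v x) (at x) \<and> (v has_real_derivative V x * w x) (at x)" for x
  proof -
    define R where "R = \<bar>x - z0\<bar> + 1"
    have x: "z0 - R < x" "x < z0 + R" by (auto simp: R_def abs_less_iff)
    have U1: "uniform_limit {z0-R..z0+R} (\<lambda>n. fst (picard V z0 a b n)) w sequentially"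
      unfolding w_def by (rule picard_uniform_limit(1)[OF V])
    have U2: "uniform_limit {z0-R..z0+R} (\<lambda>n. snd (picard V z0 a b n)) v sequentially"
      unfolding v_def by (rule picard_uniform_limit(2)[OF V])
    have "continuous_on {z0-R..z0+R} w"
      using picard_continuous[OF V] by (intro uniform_limit_theorem[OF _ U1] always_eventually) auto
    then have "bounded (w ` {z0-R..z0+R})" using compact_continuous_image compact_imp_bounded by blast
    moreover have "bounded (V ` {z0-R..z0+R})"
      using compact_continuous_image[OF continuous_on_subset[OF V]] compact_imp_bounded by blast
    ultimately have U3: "uniform_limit {z0-R..z0+R} (\<lambda>n y. V y * fst (picard V z0 a b n) y) (\<lambda>y. V y * w y) sequentially"
      by (intro uniform_lim_mult[OF uniform_limit_const U1])
    have U1': "uniform_limit {z0-R..z0+R} (\<lambda>n. fst (picard V z0 a b (Suc n))) w sequentially"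
      using filterlim_sequentially_Suc[of "\<lambda>n. fst (picard V z0 a b n)"] U1 by simp
    have U2': "uniform_limit {z0-R..z0+R} (\<lambda>n. snd (picard V z0 a b (Suc n))) v sequentially"
      using filterlim_sequentially_Suc[of "\<lambda>n. snd (picard V z0 a b n)"] U2 by simp
    show ?thesis
      using has_real_derivative_of_uniform_limit[OF U1' U2 picard_has_derivative(1)[OF V] x]
        has_real_derivative_of_uniform_limit[OF U2' U3 picard_has_derivative(2)[OF V] x]
      by blast
  qed
  moreover have "w z0 = a" "v z0 = b" by (simp_all add: w_def v_def picard_initial[OF V])
  ultimately show ?thesis by blast
qed

section \<open>Exponential decay of the wave at \<open>+\<infinity>\<close>\<close>

lemma lyapunov_derivative_le:
  fixes d c e U P :: real
  assumes d: "d > 0" and c: "c > 0" and e: "e > 0" and ec: "e * (1 + c^2/d) \<le> c/2" and U: "\<bar>U\<bar> \<le> 1/2"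
  shows "-(c-e)*P^2 - (e*c/d)*U*P - (e/d)*U^2*(1-U) \<le> -(c/2)*P^2 - (e/(4*d))*U^2"
proof -
  have ed: "e/d > 0" using d e by auto
  have h1: "-(c*U*P) \<le> U^2/4 + c^2*P^2"
    using sum_squares_ge_zero[of "U/2 + c*P" 0] by (simp add: power2_eq_square algebra_simps)
  have h2: "U^2/2 \<le> U^2*(1-U)"
  proof -
    have "1/2 \<le> 1 - U" using U by auto
    then show ?thesis using mult_left_mono[of "1/2" "1-U" "U^2"] by simp
  qed
  have h1': "(e/d)*(-(c*U*P)) \<le> (e/d)*(U^2/4 + c^2*P^2)" by (metis mult_left_mono h1 ed less_imp_le)
  have h2': "(e/d)*(U^2/2) \<le> (e/d)*(U^2*(1-U))" by (metis mult_left_mono h2 ed less_imp_le)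
  have h3: "(e + (e/d)*c^2)*P^2 \<le> (c/2)*P^2"
    using mult_right_mono[OF ec, of "P^2"] by (simp add: algebra_simps)
  have "-(c-e)*P^2 - (e*c/d)*U*P - (e/d)*U^2*(1-U)
      = -c*P^2 + e*P^2 + (e/d)*(-(c*U*P)) - (e/d)*(U^2*(1-U))" using d by (simp add: field_simps)
  also have "\<dots> \<le> -c*P^2 + e*P^2 + (e/d)*(U^2/4 + c^2*P^2) - (e/d)*(U^2/2)" by (intro diff_mono add_left_mono h1' h2')
  also have "\<dots> = -c*P^2 + (e + (e/d)*c^2)*P^2 - (e/(4*d))*U^2" by (simp add: algebra_simps)
  also have "\<dots> \<le> -c*P^2 + (c/2)*P^2 - (e/(4*d))*U^2" by (intro diff_right_mono add_left_mono h3)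
  finally show ?thesis by (simp add: algebra_simps)
qed

lemma lyapunov_bounds:
  fixes d e U P :: real
  assumes d: "d > 0" and e: "e > 0" and e2: "e^2 \<le> d/6" and U: "\<bar>U\<bar> \<le> 1/2"
  shows "d*P^2/2 + U^2/2 - U^3/3 + e*U*P \<le> d*P^2 + U^2"
    and "U^2/6 \<le> d*P^2/2 + U^2/2 - U^3/3 + e*U*P"
proof -
  have c1: "\<bar>U^3\<bar> \<le> U^2/2"
  proof -
    have "\<bar>U^3\<bar> = \<bar>U\<bar> * U^2" by (simp add: power3_eq_cube power2_eq_square abs_mult)
    also have "\<dots> \<le> (1/2) * U^2" using U by (intro mult_right_mono) auto
    finally show ?thesis by simp
  qed
  have c2: "\<bar>e*U*P\<bar> \<le> d*P^2/4 + (e^2/d)*U^2"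
  proof -
    have "0 \<le> (d*\<bar>P\<bar>/2 - e*\<bar>U\<bar>)^2" by simp
    also have "\<dots> = d*(d*P^2/4) - d*(e*\<bar>U\<bar>*\<bar>P\<bar>) + e^2*U^2"
      by (simp add: power2_eq_square algebra_simps)
    finally have "d*(e*\<bar>U\<bar>*\<bar>P\<bar>) \<le> d*(d*P^2/4 + (e^2/d)*U^2)"
      using d by (simp add: algebra_simps)
    then have "e*\<bar>U\<bar>*\<bar>P\<bar> \<le> d*P^2/4 + (e^2/d)*U^2" using d by (simp add: mult_le_cancel_left_pos)
    then show ?thesis using e by (simp add: abs_mult)
  qed
  have c3: "(e^2/d)*U^2 \<le> U^2/6"
  proof -
    have "e^2/d \<le> 1/6" using e2 d by (simp add: divide_simps)
    then show ?thesis using mult_right_mono[of "e^2/d" "1/6" "U^2"] by simp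
  qed
  have "0 \<le> d*P^2" using d by simp
  moreover have "U^3 \<le> U^2/2" "-(U^2/2) \<le> U^3" using c1 by (auto simp: abs_le_iff)
  moreover have "e*U*P \<le> d*P^2/4 + (e^2/d)*U^2" "-(e*U*P) \<le> d*P^2/4 + (e^2/d)*U^2" using c2 by (auto simp: abs_le_iff)
  ultimately show "d*P^2/2 + U^2/2 - U^3/3 + e*U*P \<le> d*P^2 + U^2"
    and "U^2/6 \<le> d*P^2/2 + U^2/2 - U^3/3 + e*U*P" using c3 by linarith+
qed

lemma le_exp_decay_of_deriv_le:
  fixes Q Q' :: "real \<Rightarrow> real"
  assumes dQ: "\<And>x. x \<ge> a \<Longrightarrow> (Q has_real_derivative Q' x) (at x)"
    and le: "\<And>x. x \<ge> a \<Longrightarrow> Q' x \<le> - \<alpha> * Q x" and x: "x \<ge> a"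
  shows "Q x \<le> Q a * exp (- \<alpha> * (x - a))"
proof -
  have "exp (\<alpha> * x) * Q x \<le> exp (\<alpha> * a) * Q a"
  proof (rule deriv_nonpos_imp_antimono[OF _ _ x, where g'="\<lambda>x. exp (\<alpha> * x) * (\<alpha> * Q x + Q' x)"])
    show "((\<lambda>x. exp (\<alpha> * x) * Q x) has_real_derivative exp (\<alpha> * y) * (\<alpha> * Q y + Q' y)) (at y)"
      if "y \<in> {a..x}" for y
      using that by (auto intro!: derivative_eq_intros dQ simp: algebra_simps)
    show "exp (\<alpha> * y) * (\<alpha> * Q y + Q' y) \<le> 0" if "y \<in> {a..x}" for y
      using le[of y] that by (intro mult_nonneg_nonpos) auto
  qed
  then have "Q x \<le> exp (\<alpha> * a) * Q a / exp (\<alpha> * x)" by (simp add: field_simps)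
  also have "\<dots> = Q a * exp (- \<alpha> * (x - a))"
    by (simp add: exp_diff right_diff_distrib)
  finally show ?thesis .
qed

lemma lyapunov_dissipation:
  fixes d c e U P :: real
  assumes d: "d > 0" and c: "c > 0" and e: "e > 0" and ec: "e * (1 + c^2/d) \<le> c/2"
    and e2: "e^2 \<le> d/6" and U: "\<bar>U\<bar> \<le> 1/2"
  shows "-(c-e)*P^2 - (e*c/d)*U*P - (e/d)*U^2*(1-U)
    \<le> - min (c/(2*d)) (e/(4*d)) * (d*P^2/2 + U^2/2 - U^3/3 + e*U*P)"
proof -
  define \<alpha> where "\<alpha> = min (c/(2*d)) (e/(4*d))"
  have "\<alpha> > 0" using c d e by (auto simp: \<alpha>_def)
  have P: "(\<alpha>*d) * P^2 \<le> (c/2) * P^2"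
    using d by (intro mult_right_mono) (auto simp: \<alpha>_def min_def field_simps)
  have U2: "\<alpha> * U^2 \<le> (e/(4*d)) * U^2" by (intro mult_right_mono) (auto simp: \<alpha>_def)
  have "-(c-e)*P^2 - (e*c/d)*U*P - (e/d)*U^2*(1-U) \<le> -(c/2)*P^2 - (e/(4*d))*U^2"
    by (rule lyapunov_derivative_le[OF d c e ec U])
  also have "\<dots> \<le> - \<alpha> * (d*P^2 + U^2)" using P U2 by (simp add: algebra_simps)
  also have "\<dots> \<le> - \<alpha> * (d*P^2/2 + U^2/2 - U^3/3 + e*U*P)"
    using lyapunov_bounds(1)[OF d e e2 U] \<open>\<alpha> > 0\<close> by (simp add: mult_left_mono)
  finally show ?thesis unfolding \<alpha>_def .
qed

lemma wave_lyapunov_has_real_derivative: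
  fixes u du :: "real \<Rightarrow> real" and d c e :: real
  assumes d: "d > 0"
    and du: "\<And>x. (u has_real_derivative du x) (at x)"
    and ddu: "\<And>x. (du has_real_derivative (- (c * du x + u x * (1 - u x)) / d)) (at x)"
  shows "((\<lambda>x. d*du x^2/2 + u x^2/2 - u x^3/3 + e*u x*du x) has_real_derivative
      -(c-e)*du x^2 - (e*c/d)*u x*du x - (e/d)*u x^2*(1 - u x)) (at x)"
proof -
  have "((\<lambda>x. d*du x^2/2 + u x^2/2 - u x^3/3 + e*u x*du x) has_real_derivative
     d*(2*du x*((- (c * du x + u x * (1 - u x)) / d)))/2 + 2*u x*du x/2 - 3*u x^2*du x/3
       + e*(du x*du x + u x*((- (c * du x + u x * (1 - u x)) / d)))) (at x)"
    by (rule derivative_eq_intros du ddu refl | simp)+ (simp add: algebra_simps power2_eq_square power3_eq_cube)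
  moreover have "d*(2*du x*((- (c * du x + u x * (1 - u x)) / d)))/2 + 2*u x*du x/2 - 3*u x^2*du x/3
       + e*(du x*du x + u x*((- (c * du x + u x * (1 - u x)) / d)))
     = -(c-e)*du x^2 - (e*c/d)*u x*du x - (e/d)*u x^2*(1 - u x)"
    using d by (simp add: field_simps power2_eq_square power3_eq_cube)
  ultimately show ?thesis by simp
qed

lemma travelling_wave_exp_decay:
  fixes u du :: "real \<Rightarrow> real" and d c :: real
  assumes d: "d > 0" and c: "c > 0"
    and du: "\<And>x. (u has_real_derivative du x) (at x)"
    and ddu: "\<And>x. (du has_real_derivative (- (c * du x + u x * (1 - u x)) / d)) (at x)"
    and lim: "(u \<longlongrightarrow> 0) at_top"
  shows "\<exists>K \<gamma> s0. K \<ge> 0 \<and> \<gamma> > 0 \<and> (\<forall>s\<ge>s0. \<bar>u s\<bar> \<le> K * exp (- \<gamma> * s))"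
proof -
  have "\<forall>\<^sub>F x in at_top. \<bar>u x\<bar> < 1/2"
    using tendsto_rabs[OF lim] by (intro order_tendstoD(2)) auto
  then obtain s0 where s0: "\<And>s. s \<ge> s0 \<Longrightarrow> \<bar>u s\<bar> \<le> 1/2"
    by (auto simp: eventually_at_top_linorder) (meson less_imp_le)
  define e where "e = min (c/(2 + 2*c^2/d)) (min 1 (d/6))"
  have p: "2 + 2*c^2/d > 0" using d by (simp add: add_pos_nonneg)
  then have e0: "e > 0" using c d by (auto simp: e_def)
  have ec: "e * (1 + c^2/d) \<le> c/2"
  proof -
    have "e \<le> c/(2 + 2*c^2/d)" by (simp add: e_def)
    then have "e * (2 + 2*c^2/d) \<le> c" using p by (simp add: pos_le_divide_eq)
    then show ?thesis by (simp add: algebra_simps)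
  qed
  have e2: "e^2 \<le> d/6"
  proof -
    have "e \<le> 1" "e \<le> d/6" unfolding e_def by linarith+
    then have "e*e \<le> 1 * (d/6)" using e0 by (intro mult_mono) auto
    then show ?thesis by (simp add: power2_eq_square)
  qed
  \<comment> \<open>The energy \<open>\<delta> u'\<^sup>2/2 + u\<^sup>2/2 - u\<^sup>3/3\<close> alone only dissipates \<open>u'\<close>; the small cross term \<open>e u u'\<close> makes \<open>Q' \<le> -\<alpha> Q\<close>.\<close>
  define Q where "Q x = d*du x^2/2 + u x^2/2 - u x^3/3 + e*u x*du x" for x
  define Q' where "Q' x = -(c-e)*du x^2 - (e*c/d)*u x*du x - (e/d)*u x^2*(1 - u x)" for x
  have dQ: "(Q has_real_derivative Q' x) (at x)" for x
    unfolding Q_def Q'_def by (rule wave_lyapunov_has_real_derivative[OF d du ddu])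
  define \<alpha> where "\<alpha> = min (c/(2*d)) (e/(4*d))"
  have \<alpha>0: "\<alpha> > 0" using c d e0 by (auto simp: \<alpha>_def)
  have Q'Q: "Q' x \<le> - \<alpha> * Q x" if "x \<ge> s0" for x
    unfolding Q_def Q'_def \<alpha>_def using s0 that by (intro lyapunov_dissipation[OF d c e0 ec e2]) auto
  define C where "C = 6 * Q s0 * exp (\<alpha> * s0)"
  have uC: "u x^2 \<le> C * exp (- \<alpha> * x)" if "x \<ge> s0" for x
  proof -
    have "u x^2/6 \<le> Q x" unfolding Q_def using s0 that by (intro lyapunov_bounds(2)[OF d e0 e2]) auto
    also have "\<dots> \<le> Q s0 * exp (- \<alpha> * (x - s0))" using dQ Q'Q that by (rule le_exp_decay_of_deriv_le)
    finally show ?thesis by (simp add: C_def algebra_simps exp_diff exp_minus field_simps)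
  qed
  have "0 \<le> C * exp (- \<alpha> * s0)" using uC[of s0] zero_le_power2[of "u s0"] by linarith
  then have C0: "C \<ge> 0" by (simp add: zero_le_mult_iff)
  show ?thesis
  proof (intro exI conjI allI impI)
    show "sqrt C \<ge> 0" "\<alpha>/2 > 0" using C0 \<alpha>0 by auto
    fix s assume "s \<ge> s0"
    have "u s^2 \<le> (sqrt C * exp (-(\<alpha>/2) * s))^2"
      using uC[OF \<open>s \<ge> s0\<close>] C0
      by (simp add: power_mult_distrib exp_double[symmetric] power2_eq_square[of "exp _"] exp_add[symmetric])
    then show "\<bar>u s\<bar> \<le> sqrt C * exp (-(\<alpha>/2) * s)"
      using C0 abs_le_square_iff[of "u s" "sqrt C * exp (-(\<alpha>/2) * s)"] by simp
  qed
qed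

section \<open>Asymptotically affine solutions for exponentially decaying \<open>V\<close>\<close>

definition exp_affine_tail :: "real \<Rightarrow> real \<Rightarrow> real \<Rightarrow> real \<Rightarrow> real \<Rightarrow> real \<Rightarrow> real" where
  "exp_affine_tail K \<gamma> a m F x = -(K/\<gamma>) * exp (-\<gamma>*x) * (m + F*(x - a)) - (K*F/\<gamma>^2) * exp (-\<gamma>*x)"

definition exp_affine_tail2 :: "real \<Rightarrow> real \<Rightarrow> real \<Rightarrow> real \<Rightarrow> real \<Rightarrow> real \<Rightarrow> real" where
  "exp_affine_tail2 K \<gamma> a m F x = -(K/\<gamma>^2) * exp (-\<gamma>*x) * (m + F*(x - a)) - (2*K*F/\<gamma>^3) * exp (-\<gamma>*x)"

lemma exp_affine_tail_has_real_derivative: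
  assumes "\<gamma> > 0"
  shows "(exp_affine_tail K \<gamma> a m F has_real_derivative K * exp (-\<gamma>*x) * (m + F*(x - a))) (at x)"
  unfolding exp_affine_tail_def
  by (rule derivative_eq_intros refl | simp)+ (use assms in \<open>simp add: field_simps power2_eq_square\<close>)

lemma exp_affine_tail2_has_real_derivative:
  assumes "\<gamma> > 0"
  shows "(exp_affine_tail2 K \<gamma> a m F has_real_derivative - exp_affine_tail K \<gamma> a m F x) (at x)"
  unfolding exp_affine_tail2_def exp_affine_tail_def
  by (rule derivative_eq_intros refl | simp)+
     (use assms in \<open>simp add: field_simps power2_eq_square power3_eq_cube\<close>)

lemma exp_affine_tail_tendsto_0: "\<gamma> > 0 \<Longrightarrow> (exp_affine_tail K \<gamma> a m F \<longlongrightarrow> 0) at_top"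
  unfolding exp_affine_tail_def by real_asymp

lemma exp_affine_tail2_tendsto_0: "\<gamma> > 0 \<Longrightarrow> (exp_affine_tail2 K \<gamma> a m F \<longlongrightarrow> 0) at_top"
  unfolding exp_affine_tail2_def by real_asymp

lemma exp_affine_tail_nonpos:
  assumes "K \<ge> 0" "\<gamma> > 0" "m \<ge> 0" "F \<ge> 0" "x \<ge> a"
  shows "exp_affine_tail K \<gamma> a m F x \<le> 0"
proof -
  have "0 \<le> (K/\<gamma>) * exp (-\<gamma>*x) * (m + F*(x - a))" "0 \<le> (K*F/\<gamma>^2) * exp (-\<gamma>*x)"
    using assms by auto
  then show ?thesis unfolding exp_affine_tail_def by linarith
qed

lemma decaying_potential_deriv_bounded:
  fixes w w1 V :: "real \<Rightarrow> real"
  assumes dw: "\<And>x. (w has_real_derivative w1 x) (at x)"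
    and dw1: "\<And>x. (w1 has_real_derivative V x * w x) (at x)"
    and K: "K \<ge> 0" and \<gamma>: "\<gamma> > 0"
    and Vb: "\<And>s. s \<ge> a \<Longrightarrow> \<bar>V s\<bar> \<le> K * exp (-\<gamma> * s)" and small: "K * exp (-\<gamma>*a) \<le> \<gamma>^2/2"
    and z: "z \<ge> a"
  shows "\<bar>w1 z\<bar> \<le> 2 * (\<bar>w1 a\<bar> + K * exp (-\<gamma>*a) * \<bar>w a\<bar> / \<gamma>)"
proof -
  have "continuous_on {a..z} w1"
    using dw1 by (auto intro!: DERIV_continuous continuous_at_imp_continuous_on)
  then have "continuous_on {a..z} (\<lambda>y. \<bar>w1 y\<bar>)" by (intro continuous_intros)
  then obtain t where t: "t \<in> {a..z}" "\<And>y. y \<in> {a..z} \<Longrightarrow> \<bar>w1 y\<bar> \<le> \<bar>w1 t\<bar>"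
    using continuous_attains_sup[of "{a..z}" "\<lambda>y. \<bar>w1 y\<bar>"] z by auto
  \<comment> \<open>With \<open>F = max |w1|\<close> on \<open>[a, z]\<close>, integrating \<open>w1' = V w\<close> against \<open>|w| \<le> m + F (x - a)\<close> gives \<open>F \<le> |w1 a| + K e\<^sup>-\<^sup>\<gamma>\<^sup>a m/\<gamma> + F/2\<close>.\<close>
  define F where "F = \<bar>w1 t\<bar>"
  define m where "m = \<bar>w a\<bar>"
  have "\<bar>w x\<bar> \<le> m + F*(x - a)" if "x \<in> {a..t}" for x
  proof -
    have "\<bar>w x - w a\<bar> \<le> F*x - F*a"
      by (rule abs_diff_le_of_abs_deriv_le[where f'=w1 and g'="\<lambda>_. F"])
         (use dw that t in \<open>auto intro!: derivative_eq_intros simp: F_def\<close>)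
    then show ?thesis by (auto simp: m_def algebra_simps)
  qed
  then have "\<bar>V x * w x\<bar> \<le> K * exp (-\<gamma>*x) * (m + F*(x - a))" if "x \<in> {a..t}" for x
    using Vb[of x] that unfolding abs_mult by (intro mult_mono) auto
  then have "\<bar>w1 t - w1 a\<bar> \<le> exp_affine_tail K \<gamma> a m F t - exp_affine_tail K \<gamma> a m F a"
    using t dw1 exp_affine_tail_has_real_derivative[OF \<gamma>]
    by (intro abs_diff_le_of_abs_deriv_le[where f'="\<lambda>x. V x * w x"
          and g'="\<lambda>x. K * exp (-\<gamma>*x) * (m + F*(x - a))"]) auto
  also have "\<dots> \<le> K * exp (-\<gamma>*a) * m / \<gamma> + K * exp (-\<gamma>*a) * F / \<gamma>^2"
  proof -
    have "exp_affine_tail K \<gamma> a m F t \<le> 0"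
      by (rule exp_affine_tail_nonpos) (use K \<gamma> t in \<open>auto simp: m_def F_def\<close>)
    moreover have "- exp_affine_tail K \<gamma> a m F a = K * exp (-\<gamma>*a) * m / \<gamma> + K * exp (-\<gamma>*a) * F / \<gamma>^2"
      by (simp add: exp_affine_tail_def field_simps)
    ultimately show ?thesis by linarith
  qed
  also have "K * exp (-\<gamma>*a) * F / \<gamma>^2 \<le> F / 2"
  proof -
    have "K * exp (-\<gamma>*a) * F \<le> (\<gamma>^2/2) * F" using small by (intro mult_right_mono) (auto simp: F_def)
    then show ?thesis using \<gamma> by (simp add: divide_right_mono field_simps)
  qed
  finally have "F \<le> \<bar>w1 a\<bar> + K * exp (-\<gamma>*a) * m / \<gamma> + F / 2" by (auto simp: F_def)
  then show ?thesis using t(2)[of z] z by (auto simp: F_def m_def)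
qed

lemma decaying_potential_vanishing:
  fixes w w1 V :: "real \<Rightarrow> real"
  assumes dw: "\<And>x. (w has_real_derivative w1 x) (at x)"
    and dw1: "\<And>x. (w1 has_real_derivative V x * w x) (at x)"
    and K: "K \<ge> 0" and \<gamma>: "\<gamma> > 0"
    and Vb: "\<And>s. s \<ge> a \<Longrightarrow> \<bar>V s\<bar> \<le> K * exp (-\<gamma> * s)" and small: "K * exp (-\<gamma>*a) \<le> \<gamma>^2/2"
    and w0: "(w \<longlongrightarrow> 0) at_top" and w10: "(w1 \<longlongrightarrow> 0) at_top"
    and bdd: "bdd_above ((\<lambda>x. \<bar>w x\<bar>) ` {a..})"
  shows "\<forall>\<^sub>F z in at_top. w z = 0 \<and> w1 z = 0"
proof -
  define N where "N = Sup ((\<lambda>x. \<bar>w x\<bar>) ` {a..})"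
  have wN: "\<bar>w x\<bar> \<le> N" if "x \<ge> a" for x
    unfolding N_def using that bdd by (intro cSUP_upper) auto
  have N0: "N \<ge> 0" using wN[of a] by auto
  \<comment> \<open>Integrating twice from \<open>\<infinity>\<close> gives \<open>|w| \<le> K N e\<^sup>-\<^sup>\<gamma>\<^sup>x/\<gamma>\<^sup>2 \<le> N/2\<close> on \<open>[a, \<infinity>)\<close>, so the supremum \<open>N\<close> vanishes.\<close>
  have Vw: "\<bar>V x * w x\<bar> \<le> K*N * exp (-\<gamma>*x)" if "x \<ge> a" for x
  proof -
    have "\<bar>V x\<bar> * \<bar>w x\<bar> \<le> (K * exp (-\<gamma>*x)) * N" using Vb[of x] wN[OF that] that by (intro mult_mono) auto
    then show ?thesis unfolding abs_mult by (simp add: algebra_simps)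
  qed
  have d1: "((\<lambda>x. - (K*N/\<gamma>) * exp (-\<gamma>*x)) has_real_derivative K*N * exp (-\<gamma>*x)) (at x)" for x
    using \<gamma> by (auto intro!: derivative_eq_intros)
  have l1: "((\<lambda>x. - (K*N/\<gamma>) * exp (-\<gamma>*x)) \<longlongrightarrow> 0) at_top" using \<gamma> by real_asymp
  have w1b: "\<bar>w1 x\<bar> \<le> (K*N/\<gamma>) * exp (-\<gamma>*x)" if "x \<ge> a" for x
    using abs_le_of_tendsto_0_abs_deriv_le[OF dw1 d1 Vw w10 l1 that] by simp
  have d2: "((\<lambda>x. - (K*N/\<gamma>^2) * exp (-\<gamma>*x)) has_real_derivative (K*N/\<gamma>) * exp (-\<gamma>*x)) (at x)" for x
    using \<gamma> by (auto intro!: derivative_eq_intros simp: power2_eq_square)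
  have l2: "((\<lambda>x. - (K*N/\<gamma>^2) * exp (-\<gamma>*x)) \<longlongrightarrow> 0) at_top" using \<gamma> by real_asymp
  have wb': "\<bar>w x\<bar> \<le> (K*N/\<gamma>^2) * exp (-\<gamma>*x)" if "x \<ge> a" for x
    using abs_le_of_tendsto_0_abs_deriv_le[OF dw d2 w1b w0 l2 that] by simp
  have wb: "\<bar>w x\<bar> \<le> N/2" if "x \<ge> a" for x
  proof -
    have "\<bar>w x\<bar> \<le> (K*N/\<gamma>^2) * exp (-\<gamma>*x)" by (rule wb'[OF that])
    also have "\<dots> \<le> (K*N/\<gamma>^2) * exp (-\<gamma>*a)" using that \<gamma> K N0 by (intro mult_left_mono) auto
    also have "\<dots> = (K * exp (-\<gamma>*a)) * N / \<gamma>^2" by simp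
    also have "\<dots> \<le> (\<gamma>^2/2) * N / \<gamma>^2" using small N0 \<gamma> by (intro divide_right_mono mult_right_mono) auto
    also have "\<dots> = N/2" using \<gamma> by simp
    finally show ?thesis .
  qed
  have "N \<le> N/2" unfolding N_def by (subst N_def[symmetric], rule cSUP_least) (use wb in auto)
  then have "N = 0" using N0 by auto
  then show ?thesis unfolding eventually_at_top_linorder
    by (intro exI[of _ a]) (use wN w1b in force)
qed

lemma decaying_potential_asymptotics:
  fixes w w1 V :: "real \<Rightarrow> real"
  assumes dw: "\<And>x. (w has_real_derivative w1 x) (at x)"
    and dw1: "\<And>x. (w1 has_real_derivative V x * w x) (at x)"
    and K: "K \<ge> 0" and \<gamma>: "\<gamma> > 0"
    and Vb: "\<And>s. s \<ge> s0 \<Longrightarrow> \<bar>V s\<bar> \<le> K * exp (-\<gamma> * s)"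
  shows "\<exists>A B. (w1 \<longlongrightarrow> B) at_top \<and> ((\<lambda>z. w z - B*z) \<longlongrightarrow> A) at_top \<and>
     (A = 0 \<and> B = 0 \<longrightarrow> (\<forall>\<^sub>F z in at_top. w z = 0 \<and> w1 z = 0))"
proof -
  have "((\<lambda>z. K * exp (-\<gamma>*z)) \<longlongrightarrow> 0) at_top" using \<gamma> by real_asymp
  then have "\<forall>\<^sub>F z in at_top. K * exp (-\<gamma>*z) < \<gamma>^2/2" using \<gamma> by (intro order_tendstoD) auto
  then have "\<forall>\<^sub>F z in at_top. K * exp (-\<gamma>*z) < \<gamma>^2/2 \<and> z \<ge> s0"
    using eventually_ge_at_top[of s0] by (rule eventually_conj)
  then obtain a where a: "a \<ge> s0" "K * exp (-\<gamma>*a) \<le> \<gamma>^2/2"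
    by (auto simp: eventually_at_top_linorder)
  have Vb': "\<bar>V s\<bar> \<le> K * exp (-\<gamma> * s)" if "s \<ge> a" for s using Vb a that by auto
  define m where "m = \<bar>w a\<bar>"
  define D where "D = 2 * (\<bar>w1 a\<bar> + K * exp (-\<gamma>*a) * m / \<gamma>)"
  have D0: "D \<ge> 0" using K \<gamma> by (auto simp: D_def m_def)
  have w1D: "\<bar>w1 z\<bar> \<le> D" if "z \<ge> a" for z
    unfolding D_def m_def by (rule decaying_potential_deriv_bounded[OF dw dw1 K \<gamma> Vb' a(2) that])
  have "\<bar>w x - w a\<bar> \<le> D*x - D*a" if "x \<ge> a" for x
    by (rule abs_diff_le_of_abs_deriv_le[where f'=w1 and g'="\<lambda>_. D"])
       (use dw that w1D in \<open>auto intro!: derivative_eq_intros\<close>)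
  then have "\<bar>w x\<bar> \<le> m + D*(x - a)" if "x \<ge> a" for x using that by (force simp: m_def algebra_simps)
  then have Vw: "\<bar>V x * w x\<bar> \<le> K * exp (-\<gamma>*x) * (m + D*(x - a))" if "x \<ge> a" for x
    using Vb'[of x] that unfolding abs_mult by (intro mult_mono) auto
  obtain B where B: "(w1 \<longlongrightarrow> B) at_top"
      "\<And>x. x \<ge> a \<Longrightarrow> \<bar>B - w1 x\<bar> \<le> 0 - exp_affine_tail K \<gamma> a m D x"
    using tendsto_at_top_of_abs_deriv_le[OF dw1 exp_affine_tail_has_real_derivative[OF \<gamma>] Vw
        exp_affine_tail_tendsto_0[OF \<gamma>]]
    by blast
  have "\<exists>A. ((\<lambda>z. w z - B*z) \<longlongrightarrow> A) at_top \<and>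
      (\<forall>x\<ge>a. \<bar>A - (w x - B*x)\<bar> \<le> 0 - exp_affine_tail2 K \<gamma> a m D x)"
  proof (rule tendsto_at_top_of_abs_deriv_le[where f'="\<lambda>x. w1 x - B"])
    show "((\<lambda>z. w z - B*z) has_real_derivative w1 x - B) (at x)" for x
      using dw[of x] by (auto intro!: derivative_eq_intros)
    show "\<bar>w1 x - B\<bar> \<le> - exp_affine_tail K \<gamma> a m D x" if "x \<ge> a" for x using B(2)[OF that] by auto
  qed (use exp_affine_tail2_has_real_derivative[OF \<gamma>] exp_affine_tail2_tendsto_0[OF \<gamma>] in auto)
  then obtain A where A: "((\<lambda>z. w z - B*z) \<longlongrightarrow> A) at_top"
      "\<And>x. x \<ge> a \<Longrightarrow> \<bar>A - (w x - B*x)\<bar> \<le> 0 - exp_affine_tail2 K \<gamma> a m D x"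
    by blast
  have "\<forall>\<^sub>F z in at_top. w z = 0 \<and> w1 z = 0" if AB: "A = 0" "B = 0"
  proof (rule decaying_potential_vanishing[OF dw dw1 K \<gamma> Vb' a(2)])
    show "(w \<longlongrightarrow> 0) at_top" "(w1 \<longlongrightarrow> 0) at_top" using A(1) B(1) AB by simp_all
    have "exp_affine_tail2 K \<gamma> a m D a \<le> exp_affine_tail2 K \<gamma> a m D x" if "x \<ge> a" for x
      using exp_affine_tail_nonpos[OF K \<gamma> _ D0] that
      by (intro deriv_nonneg_imp_mono[OF exp_affine_tail2_has_real_derivative[OF \<gamma>]])
         (auto simp: m_def)
    then have "\<bar>w x\<bar> \<le> - exp_affine_tail2 K \<gamma> a m D a" if "x \<ge> a" for x
      using A(2)[OF that] AB that by fastforce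
    then show "bdd_above ((\<lambda>x. \<bar>w x\<bar>) ` {a..})" by (intro bdd_aboveI2) auto
  qed
  then show ?thesis using A(1) B(1) by blast
qed

section \<open>Shooting for the unstable solution at \<open>-\<infinity>\<close>\<close>

lemma riccati_quotient_has_real_derivative:
  fixes w v V :: "real \<Rightarrow> real"
  assumes "(w has_real_derivative v x) (at x)" and "(v has_real_derivative V x * w x) (at x)"
    and "w x \<noteq> 0"
  shows "((\<lambda>s. v s / w s) has_real_derivative V x - (v x / w x)^2) (at x)"
proof -
  have "((\<lambda>s. v s / w s) has_real_derivative (V x * w x * w x - v x * v x) / (w x * w x)) (at x)"
    by (rule DERIV_divide[OF assms(2,1,3)])
  moreover have "(V x * w x * w x - v x * v x) / (w x * w x) = V x - (v x / w x)^2"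
    using assms(3) by (simp add: field_simps power2_eq_square)
  ultimately show ?thesis by simp
qed

lemma riccati_stays_above_backward:
  fixes \<eta> V :: "real \<Rightarrow> real"
  assumes "z \<le> y" and d\<eta>: "\<And>s. s \<in> {z..y} \<Longrightarrow> (\<eta> has_real_derivative V s - (\<eta> s)^2) (at s)"
    and V: "\<And>s. s \<in> {z..y} \<Longrightarrow> V s < b^2" and "\<eta> y > b"
  shows "\<eta> z > b"
proof -
  have "(\<lambda>s. \<eta> s - b) z > 0"
  proof (rule pos_of_deriv_neg_at_zeros[OF \<open>z \<le> y\<close>])
    show "continuous_on {z..y} (\<lambda>s. \<eta> s - b)"
      using d\<eta> by (intro continuous_intros continuous_at_imp_continuous_on ballI DERIV_isCont) auto
    show "\<exists>d<0. ((\<lambda>s. \<eta> s - b) has_real_derivative d) (at t)" if "t \<in> {z..y}" "\<eta> t - b = 0" for t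
      using d\<eta>[OF that(1)] V[OF that(1)] that(2)
      by (intro exI[of _ "V t - (\<eta> t)^2"]) (auto intro!: derivative_eq_intros)
  qed (use assms in auto)
  then show ?thesis by simp
qed

lemma riccati_stays_below_backward:
  fixes \<eta> V :: "real \<Rightarrow> real"
  assumes "z \<le> y" and d\<eta>: "\<And>s. s \<in> {z..y} \<Longrightarrow> (\<eta> has_real_derivative V s - (\<eta> s)^2) (at s)"
    and V: "\<And>s. s \<in> {z..y} \<Longrightarrow> V s > b^2" and "\<eta> y < b"
  shows "\<eta> z < b"
proof -
  have "(\<lambda>s. b - \<eta> s) z > 0"
  proof (rule pos_of_deriv_neg_at_zeros[OF \<open>z \<le> y\<close>])
    show "continuous_on {z..y} (\<lambda>s. b - \<eta> s)"
      using d\<eta> by (intro continuous_intros continuous_at_imp_continuous_on ballI DERIV_isCont) auto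
    show "\<exists>d<0. ((\<lambda>s. b - \<eta> s) has_real_derivative d) (at t)" if "t \<in> {z..y}" "b - \<eta> t = 0" for t
      using d\<eta>[OF that(1)] V[OF that(1)] that(2)
      by (intro exI[of _ "- (V t - (\<eta> t)^2)"]) (auto intro!: derivative_eq_intros)
  qed (use assms in auto)
  then show ?thesis by simp
qed

lemma riccati_above_grows_backward:
  fixes \<eta> V :: "real \<Rightarrow> real"
  assumes d\<eta>: "\<And>x. x \<le> y \<Longrightarrow> (\<eta> has_real_derivative V x - (\<eta> x)^2) (at x)"
    and V: "\<And>x. x \<le> y \<Longrightarrow> V x < r^2 + r*e" and r: "r > 0" and e: "e > 0"
    and above: "\<eta> y > r + e"
  shows "\<eta> (y - 2/e) \<ge> \<eta> y + 2*r"
proof -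
  have sq: "(r + e)^2 = r^2 + 2*(r*e) + e*e" by (simp add: power2_eq_square algebra_simps)
  have "V x < (r + e)^2" if "x \<le> y" for x
    using V[OF that] sq mult_pos_pos[OF r e] zero_le_square[of e] by linarith
  then have above': "\<eta> x > r + e" if "x \<le> y" for x
    by (intro riccati_stays_above_backward[of x y \<eta> V]) (use that d\<eta> above in auto)
  have "(\<lambda>x. - \<eta> x - r*e*x) (y - 2/e) \<le> (\<lambda>x. - \<eta> x - r*e*x) y"
  proof (rule deriv_nonneg_imp_mono[where g="\<lambda>x. - \<eta> x - r*e*x"])
    fix x assume x: "x \<in> {y - 2/e..y}"
    show "((\<lambda>x. - \<eta> x - r*e*x) has_real_derivative - (V x - (\<eta> x)^2) - r*e) (at x)"
      using d\<eta>[of x] x by (auto intro!: derivative_eq_intros)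
    have "(r + e)^2 < (\<eta> x)^2" using above'[of x] x r e by (intro power_strict_mono) auto
    moreover have "V x < r^2 + r*e" using V x by auto
    ultimately show "0 \<le> - (V x - (\<eta> x)^2) - r*e" using sq zero_le_square[of e] by linarith
  qed (use e in auto)
  then have "\<eta> y + r*e*(y - (y - 2/e)) \<le> \<eta> (y - 2/e)" by (simp add: algebra_simps)
  moreover have "r*e*(y - (y - 2/e)) = 2*r" using e by (simp add: field_simps)
  ultimately show ?thesis by simp
qed

lemma riccati_below_decreases_backward:
  fixes \<eta> V :: "real \<Rightarrow> real"
  assumes d\<eta>: "\<And>x. x \<le> y \<Longrightarrow> (\<eta> has_real_derivative V x - (\<eta> x)^2) (at x)"
    and V: "\<And>x. x \<le> y \<Longrightarrow> r^2 - r*e < V x" and pos: "\<And>x. x \<le> y \<Longrightarrow> \<eta> x > 0"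
    and r: "r > 0" and e: "0 < e" "e \<le> r/2" and below: "\<eta> y < r - e"
  shows "\<eta> (y - 2/e) \<le> \<eta> y - r"
proof -
  have sq: "(r - e)^2 = r^2 - 2*(r*e) + e*e" by (simp add: power2_eq_square algebra_simps)
  have ee: "e * e \<le> r*e/2" using mult_right_mono[of e "r/2" e] e by simp
  have "V x > (r - e)^2" if "x \<le> y" for x
    using V[OF that] sq ee mult_pos_pos[OF r e(1)] by linarith
  then have below': "\<eta> x < r - e" if "x \<le> y" for x
    by (intro riccati_stays_below_backward[of x y \<eta> V]) (use that d\<eta> below in auto)
  have "(\<lambda>x. \<eta> x - (r*e/2)*x) (y - 2/e) \<le> (\<lambda>x. \<eta> x - (r*e/2)*x) y"
  proof (rule deriv_nonneg_imp_mono[where g="\<lambda>x. \<eta> x - (r*e/2)*x"])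
    fix x assume x: "x \<in> {y - 2/e..y}"
    show "((\<lambda>x. \<eta> x - (r*e/2)*x) has_real_derivative (V x - (\<eta> x)^2) - r*e/2) (at x)"
      using d\<eta>[of x] x by (auto intro!: derivative_eq_intros)
    have "(\<eta> x)^2 < (r - e)^2" using below'[of x] pos[of x] x by (intro power_strict_mono) auto
    then show "0 \<le> (V x - (\<eta> x)^2) - r*e/2" using V[of x] x sq ee by auto
  qed (use e in auto)
  then have "\<eta> (y - 2/e) \<le> \<eta> y - (r*e/2)*(y - (y - 2/e))" by (simp add: algebra_simps diff_divide_distrib)
  moreover have "(r*e/2)*(y - (y - 2/e)) = r" using e by (simp add: field_simps)
  ultimately show ?thesis by simp
qed

lemma riccati_tendsto_at_bot:
  fixes \<eta> V :: "real \<Rightarrow> real"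
  assumes r: "r > 0" and Vlim: "(V \<longlongrightarrow> r^2) at_bot"
    and d\<eta>: "\<And>x. x \<le> z0 \<Longrightarrow> (\<eta> has_real_derivative V x - (\<eta> x)^2) (at x)"
    and band: "\<And>x. x \<le> z0 \<Longrightarrow> r/2 \<le> \<eta> x \<and> \<eta> x \<le> 3*r/2"
  shows "(\<eta> \<longlongrightarrow> r) at_bot"
proof (rule tendstoI)
  fix \<epsilon> :: real assume "\<epsilon> > 0"
  define e where "e = min (\<epsilon>/2) (r/2)"
  have e: "e > 0" "e \<le> r/2" "e < \<epsilon>" using \<open>\<epsilon> > 0\<close> r by (auto simp: e_def)
  have "\<forall>\<^sub>F x in at_bot. dist (V x) (r^2) < r * e" using Vlim r e by (auto simp: tendsto_iff)
  then have "\<forall>\<^sub>F x in at_bot. dist (V x) (r^2) < r * e \<and> x \<le> z0"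
    using eventually_le_at_bot by (rule eventually_conj)
  then obtain z where z: "\<And>x. x \<le> z \<Longrightarrow> \<bar>V x - r^2\<bar> < r * e" "z \<le> z0"
    by (auto simp: eventually_at_bot_linorder dist_real_def)
  \<comment> \<open>Outside \<open>[r - e, r + e]\<close> the solution, followed backwards, leaves the band within time \<open>2/e\<close>.\<close>
  have "\<bar>\<eta> y - r\<bar> \<le> e" if y: "y \<le> z" for y
  proof (rule ccontr)
    have d\<eta>': "(\<eta> has_real_derivative V x - (\<eta> x)^2) (at x)" if "x \<le> y" for x
      using d\<eta> that y z by auto
    have V: "r^2 - r*e < V x" "V x < r^2 + r*e" if "x \<le> y" for x
      using z(1)[of x] that y by (auto simp: abs_less_iff)
    have band': "r/2 \<le> \<eta> x \<and> \<eta> x \<le> 3*r/2" if "x \<le> y" for x using band that y z(2) by auto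
    assume "\<not> \<bar>\<eta> y - r\<bar> \<le> e"
    then consider "\<eta> y > r + e" | "\<eta> y < r - e" by linarith
    then show False
    proof cases
      case 1
      then show False using riccati_above_grows_backward[OF d\<eta>' V(2) r e(1) 1]
        band'[of y] band'[of "y - 2/e"] e(1) r by auto
    next
      case 2
      have "\<eta> x > 0" if "x \<le> y" for x using band'[OF that] r by auto
      then show False using riccati_below_decreases_backward[OF d\<eta>' V(1) _ r e(1,2) 2]
        band'[of "y - 2/e"] 2 e r by auto
    qed
  qed
  then show "\<forall>\<^sub>F x in at_bot. dist (\<eta> x) r < \<epsilon>"
    unfolding eventually_at_bot_linorder dist_real_def using e(3) by (intro exI[of _ z]) force
qed

lemma last_zero_before:
  fixes w :: "real \<Rightarrow> real"
  assumes cont: "continuous_on {z..y} w" and "w y \<noteq> 0" and "s \<in> {z..y}" and "w s = 0"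
  obtains t where "z \<le> t" "t < y" "w t = 0" "\<And>s. t < s \<Longrightarrow> s \<le> y \<Longrightarrow> w s \<noteq> 0"
proof -
  define Z where "Z = {s \<in> {z..y}. w s = 0}"
  have Z: "Z \<noteq> {}" "bdd_above Z" using assms by (auto simp: Z_def bdd_above_def)
  have "closed Z" unfolding Z_def by (rule continuous_closed_preimage_constant[OF cont]) auto
  then have "Sup Z \<in> Z" using closed_contains_Sup Z by blast
  moreover have "w s \<noteq> 0" if "Sup Z < s" "s \<le> y" for s
    using cSup_upper[OF _ Z(2), of s] that \<open>Sup Z \<in> Z\<close> by (force simp: Z_def)
  moreover have "Sup Z \<noteq> y" using \<open>Sup Z \<in> Z\<close> \<open>w y \<noteq> 0\<close> by (auto simp: Z_def)
  ultimately show ?thesis using that by (force simp: Z_def)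
qed

lemma quotient_large_right_of_zero:
  fixes w v :: "real \<Rightarrow> real"
  assumes "isCont w t" "isCont v t" "w t = 0" "v t \<noteq> 0" "t < y" "M > 0"
  obtains s where "t < s" "s \<le> y" "\<bar>w s\<bar> * M < \<bar>v s\<bar>"
proof -
  define q where "q = \<bar>v t\<bar>"
  have q: "q > 0" using assms by (simp add: q_def)
  have lim: "((\<lambda>s. \<bar>w s\<bar>) \<longlongrightarrow> 0) (at t)" "((\<lambda>s. \<bar>v s\<bar>) \<longlongrightarrow> q) (at t)"
    using assms tendsto_rabs[of w "w t" "at t"] tendsto_rabs[of v "v t" "at t"]
    by (auto simp: isCont_def q_def)
  have "\<forall>\<^sub>F s in at t. \<bar>w s\<bar> < q / (2*M)" using q \<open>M > 0\<close> by (intro order_tendstoD(2)[OF lim(1)]) auto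
  moreover have "\<forall>\<^sub>F s in at t. \<bar>v s\<bar> > q / 2" using q by (intro order_tendstoD(1)[OF lim(2)]) auto
  ultimately have "\<forall>\<^sub>F s in at_right t. \<bar>w s\<bar> < q / (2*M) \<and> \<bar>v s\<bar> > q / 2"
    using filter_leD[OF at_le[of "{t<..}" UNIV t]] by (auto intro: eventually_conj)
  moreover have "\<forall>\<^sub>F s in at_right t. t < s \<and> s \<le> y"
    using \<open>t < y\<close> unfolding eventually_at_right_field by (intro exI[of _ y]) auto
  ultimately obtain s where s: "\<bar>w s\<bar> < q / (2*M)" "\<bar>v s\<bar> > q / 2" "t < s" "s \<le> y"
    using eventually_happens[OF eventually_conj] trivial_limit_at_right_real by blast
  have "\<bar>w s\<bar> * M < q / (2*M) * M" using s(1) \<open>M > 0\<close> by (intro mult_strict_right_mono) auto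
  then have "\<bar>w s\<bar> * M < \<bar>v s\<bar>" using s(2) \<open>M > 0\<close> by simp
  then show ?thesis using that s by blast
qed

text \<open>
  The parameter \<open>\<theta>\<close> is the value at \<open>z0\<close> of the Riccati solution \<open>\<eta> \<theta> = W' \<theta> / W \<theta>\<close>.
  Those \<open>\<theta>\<close> whose solution, followed backwards, leaves the band \<open>[r/2, 3r/2]\<close> above
  (resp. below) form disjoint open sets containing \<open>3r/2\<close> (resp. \<open>r/2\<close>); by connectedness
  some \<open>\<theta>\<close> leaves neither, and its solution tends to \<open>r\<close>.
\<close>

locale riccati_shooting =
  fixes V :: "real \<Rightarrow> real" and r z0 :: real and w1 v1 w2 v2 :: "real \<Rightarrow> real"
  assumes r: "r > 0"
    and V_band: "\<And>z. z \<le> z0 \<Longrightarrow> (r/2)^2 < V z \<and> V z < (3*r/2)^2"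
    and w1: "\<And>x. (w1 has_real_derivative v1 x) (at x)"
    and v1: "\<And>x. (v1 has_real_derivative V x * w1 x) (at x)"
    and w2: "\<And>x. (w2 has_real_derivative v2 x) (at x)"
    and v2: "\<And>x. (v2 has_real_derivative V x * w2 x) (at x)"
    and initial: "w1 z0 = 1" "v1 z0 = 0" "w2 z0 = 0" "v2 z0 = 1"
begin

definition W :: "real \<Rightarrow> real \<Rightarrow> real" where "W \<theta> x = w1 x + \<theta> * w2 x"

definition W' :: "real \<Rightarrow> real \<Rightarrow> real" where "W' \<theta> x = v1 x + \<theta> * v2 x"

definition \<eta> :: "real \<Rightarrow> real \<Rightarrow> real" where "\<eta> \<theta> x = W' \<theta> x / W \<theta> x"

definition escapes_above :: "real set" where
  "escapes_above = {\<theta>. \<exists>z\<le>z0. (\<forall>s\<in>{z..z0}. W \<theta> s \<noteq> 0) \<and> \<eta> \<theta> z > 3*r/2}"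

definition escapes_below :: "real set" where
  "escapes_below = {\<theta>. \<exists>z\<le>z0. (\<forall>s\<in>{z..z0}. W \<theta> s \<noteq> 0) \<and> \<eta> \<theta> z < r/2}"

lemma W_has_real_derivative: "(W \<theta> has_real_derivative W' \<theta> x) (at x)"
  unfolding W_def W'_def by (auto intro!: derivative_eq_intros w1 w2)

lemma W'_has_real_derivative: "(W' \<theta> has_real_derivative V x * W \<theta> x) (at x)"
  unfolding W_def W'_def by (rule derivative_eq_intros v1 v2 refl | simp)+ (simp add: algebra_simps)

lemma W_initial: "W \<theta> z0 = 1" and \<eta>_initial: "\<eta> \<theta> z0 = \<theta>"
  using initial by (auto simp: W_def W'_def \<eta>_def)

lemma W_W'_not_both_zero: "W \<theta> x \<noteq> 0 \<or> W' \<theta> x \<noteq> 0"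
proof -
  have "((\<lambda>x. w1 x * v2 x - v1 x * w2 x) has_real_derivative 0) (at x)" for x
    by (rule derivative_eq_intros w1 w2 v1 v2 refl | simp)+
  then have "w1 x * v2 x - v1 x * w2 x = w1 z0 * v2 z0 - v1 z0 * w2 z0"
    by (intro DERIV_isconst_all[of "\<lambda>x. w1 x * v2 x - v1 x * w2 x"]) auto
  then have "W \<theta> x * v2 x - W' \<theta> x * w2 x = 1"
    using initial by (simp add: W_def W'_def algebra_simps)
  then show ?thesis by auto
qed

lemma \<eta>_has_real_derivative:
  "W \<theta> x \<noteq> 0 \<Longrightarrow> (\<eta> \<theta> has_real_derivative V x - (\<eta> \<theta> x)^2) (at x)"
  unfolding \<eta>_def
  by (rule riccati_quotient_has_real_derivative[OF W_has_real_derivative W'_has_real_derivative])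

lemma W_nonzero_near:
  assumes "z \<le> z0" and nz: "\<forall>s\<in>{z..z0}. W \<theta> s \<noteq> 0"
  shows "\<exists>d>0. \<forall>\<theta>'. \<bar>\<theta>' - \<theta>\<bar> < d \<longrightarrow> (\<forall>s\<in>{z..z0}. W \<theta>' s \<noteq> 0)"
proof -
  have cont: "continuous_on {z..z0} (\<lambda>s. \<bar>W \<theta> s\<bar>)" "continuous_on {z..z0} (\<lambda>s. \<bar>w2 s\<bar>)"
    using DERIV_isCont[OF W_has_real_derivative] DERIV_isCont[OF w2]
    by (auto intro!: continuous_at_imp_continuous_on continuous_intros)
  obtain sm where sm: "sm \<in> {z..z0}" "\<And>s. s \<in> {z..z0} \<Longrightarrow> \<bar>W \<theta> sm\<bar> \<le> \<bar>W \<theta> s\<bar>"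
    using continuous_attains_inf[OF compact_Icc _ cont(1)] assms(1) by auto
  obtain sM where sM: "\<forall>s\<in>{z..z0}. \<bar>w2 s\<bar> \<le> \<bar>w2 sM\<bar>"
    using continuous_attains_sup[OF compact_Icc _ cont(2)] assms(1) by auto
  define m where "m = \<bar>W \<theta> sm\<bar>"
  define M where "M = \<bar>w2 sM\<bar> + 1"
  have m: "m > 0" using nz sm by (auto simp: m_def)
  have M: "M > 0" by (simp add: M_def)
  show ?thesis
  proof (intro exI[of _ "m / M"] conjI allI impI ballI)
    show "m / M > 0" using m M by simp
    fix \<theta>' s assume \<theta>': "\<bar>\<theta>' - \<theta>\<bar> < m / M" and s: "s \<in> {z..z0}"
    have "\<bar>\<theta>' - \<theta>\<bar> * \<bar>w2 s\<bar> \<le> \<bar>\<theta>' - \<theta>\<bar> * M"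
      using bspec[OF sM s] by (intro mult_left_mono) (auto simp: M_def)
    also have "\<dots> < m" using \<theta>' M by (simp add: pos_less_divide_eq)
    also have "m \<le> \<bar>W \<theta> s\<bar>" using sm(2)[OF s] by (simp add: m_def)
    finally have "\<bar>(\<theta>' - \<theta>) * w2 s\<bar> < \<bar>W \<theta> s\<bar>" by (simp add: abs_mult)
    moreover have "W \<theta>' s = W \<theta> s + (\<theta>' - \<theta>) * w2 s" by (simp add: W_def algebra_simps)
    ultimately show "W \<theta>' s \<noteq> 0" by auto
  qed
qed

lemma open_escapes:
  assumes "\<And>\<theta> z. W \<theta> z \<noteq> 0 \<Longrightarrow> P (\<eta> \<theta> z) \<Longrightarrow> \<exists>d>0. \<forall>\<theta>'. \<bar>\<theta>' - \<theta>\<bar> < d \<longrightarrow> P (\<eta> \<theta>' z)"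
  shows "open {\<theta>. \<exists>z\<le>z0. (\<forall>s\<in>{z..z0}. W \<theta> s \<noteq> 0) \<and> P (\<eta> \<theta> z)}"
  unfolding open_dist dist_real_def
proof (intro ballI)
  fix \<theta> assume "\<theta> \<in> {\<theta>. \<exists>z\<le>z0. (\<forall>s\<in>{z..z0}. W \<theta> s \<noteq> 0) \<and> P (\<eta> \<theta> z)}"
  then obtain z where z: "z \<le> z0" "\<forall>s\<in>{z..z0}. W \<theta> s \<noteq> 0" "P (\<eta> \<theta> z)" by blast
  obtain d1 where d1: "d1 > 0" "\<And>\<theta>'. \<bar>\<theta>' - \<theta>\<bar> < d1 \<Longrightarrow> \<forall>s\<in>{z..z0}. W \<theta>' s \<noteq> 0"
    using W_nonzero_near[OF z(1,2)] by blast
  obtain d2 where d2: "d2 > 0" "\<And>\<theta>'. \<bar>\<theta>' - \<theta>\<bar> < d2 \<Longrightarrow> P (\<eta> \<theta>' z)"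
    using assms[of \<theta> z] z by auto
  show "\<exists>e>0. \<forall>y. \<bar>y - \<theta>\<bar> < e \<longrightarrow> y \<in> {\<theta>. \<exists>z\<le>z0. (\<forall>s\<in>{z..z0}. W \<theta> s \<noteq> 0) \<and> P (\<eta> \<theta> z)}"
    using d1 d2 z(1) by (intro exI[of _ "min d1 d2"]) auto
qed

lemma \<eta>_continuous_in_\<theta>: "W \<theta> z \<noteq> 0 \<Longrightarrow> ((\<lambda>\<theta>. \<eta> \<theta> z) \<longlongrightarrow> \<eta> \<theta> z) (nhds \<theta>)"
  unfolding \<eta>_def W_def W'_def by (intro tendsto_intros filterlim_ident) auto

lemma open_escapes_above: "open escapes_above"
  unfolding escapes_above_def
proof (rule open_escapes)
  fix \<theta> z assume "W \<theta> z \<noteq> 0" "3*r/2 < \<eta> \<theta> z"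
  then have "\<forall>\<^sub>F \<theta>' in nhds \<theta>. 3*r/2 < \<eta> \<theta>' z"
    using \<eta>_continuous_in_\<theta> by (intro order_tendstoD(1)) auto
  then show "\<exists>d>0. \<forall>\<theta>'. \<bar>\<theta>' - \<theta>\<bar> < d \<longrightarrow> 3*r/2 < \<eta> \<theta>' z"
    by (auto simp: eventually_nhds_metric dist_real_def)
qed

lemma open_escapes_below: "open escapes_below"
  unfolding escapes_below_def
proof (rule open_escapes)
  fix \<theta> z assume "W \<theta> z \<noteq> 0" "\<eta> \<theta> z < r/2"
  then have "\<forall>\<^sub>F \<theta>' in nhds \<theta>. \<eta> \<theta>' z < r/2"
    using \<eta>_continuous_in_\<theta> by (intro order_tendstoD(2)) auto
  then show "\<exists>d>0. \<forall>\<theta>'. \<bar>\<theta>' - \<theta>\<bar> < d \<longrightarrow> \<eta> \<theta>' z < r/2"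
    by (auto simp: eventually_nhds_metric dist_real_def)
qed

lemma W_nonzero_left_of_z0: "\<exists>d>0. \<forall>s. z0 - d \<le> s \<and> s \<le> z0 \<longrightarrow> W \<theta> s \<noteq> 0"
proof -
  have "(W \<theta> \<longlongrightarrow> W \<theta> z0) (nhds z0)"
    using DERIV_isCont[OF W_has_real_derivative[of \<theta> z0]]
    unfolding isCont_def tendsto_at_iff_tendsto_nhds .
  then have "\<forall>\<^sub>F s in nhds z0. W \<theta> s \<noteq> 0"
    using W_initial[of \<theta>] by (intro tendsto_imp_eventually_ne) auto
  then obtain d where "d > 0" "\<And>s. dist s z0 < d \<Longrightarrow> W \<theta> s \<noteq> 0"
    by (auto simp: eventually_nhds_metric)
  then show ?thesis by (intro exI[of _ "d/2"]) (auto simp: dist_real_def)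
qed

lemma escapes_of_initial_slope:
  assumes "\<forall>h>0. h < d \<longrightarrow> P (\<eta> \<theta> (z0 - h))" and "d > 0"
  shows "\<exists>z\<le>z0. (\<forall>s\<in>{z..z0}. W \<theta> s \<noteq> 0) \<and> P (\<eta> \<theta> z)"
proof -
  obtain d' where d': "d' > 0" "\<And>s. z0 - d' \<le> s \<Longrightarrow> s \<le> z0 \<Longrightarrow> W \<theta> s \<noteq> 0"
    using W_nonzero_left_of_z0 by blast
  define h where "h = min d d' / 2"
  have "h > 0" "h < d" "h \<le> d'" using assms(2) d'(1) by (auto simp: h_def)
  then show ?thesis using assms(1) d'(2) by (intro exI[of _ "z0 - h"]) auto
qed

lemma upper_in_escapes_above: "3*r/2 \<in> escapes_above"
proof -
  have "V z0 - (\<eta> (3*r/2) z0)^2 < 0" using V_band[of z0] by (simp add: \<eta>_initial)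
  from DERIV_neg_dec_left[OF \<eta>_has_real_derivative this] W_initial
  obtain d where "d > 0" "\<forall>h>0. h < d \<longrightarrow> \<eta> (3*r/2) z0 < \<eta> (3*r/2) (z0 - h)" by auto
  then show ?thesis unfolding escapes_above_def
    by (intro CollectI escapes_of_initial_slope) (auto simp: \<eta>_initial)
qed

lemma lower_in_escapes_below: "r/2 \<in> escapes_below"
proof -
  have "V z0 - (\<eta> (r/2) z0)^2 > 0" using V_band[of z0] by (simp add: \<eta>_initial)
  from DERIV_pos_inc_left[OF \<eta>_has_real_derivative this] W_initial
  obtain d where "d > 0" "\<forall>h>0. h < d \<longrightarrow> \<eta> (r/2) (z0 - h) < \<eta> (r/2) z0" by auto
  then show ?thesis unfolding escapes_below_def
    by (intro CollectI escapes_of_initial_slope) (auto simp: \<eta>_initial)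
qed

lemma escapes_above_below_disjoint: "escapes_above \<inter> escapes_below = {}"
proof (intro equalityI subsetI)
  fix \<theta> assume "\<theta> \<in> escapes_above \<inter> escapes_below"
  then obtain z1 z2 where 1: "z1 \<le> z0" "\<forall>s\<in>{z1..z0}. W \<theta> s \<noteq> 0" "\<eta> \<theta> z1 > 3*r/2"
    and 2: "z2 \<le> z0" "\<forall>s\<in>{z2..z0}. W \<theta> s \<noteq> 0" "\<eta> \<theta> z2 < r/2"
    by (auto simp: escapes_above_def escapes_below_def)
  have d\<eta>: "(\<eta> \<theta> has_real_derivative V s - (\<eta> \<theta> s)^2) (at s)" if "s \<in> {min z1 z2..z0}" for s
    using 1(2) 2(2) that by (intro \<eta>_has_real_derivative) (auto simp: min_def split: if_splits)
  show "\<theta> \<in> {}"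
  proof (cases "z1 \<le> z2")
    case True
    have "\<eta> \<theta> z1 < r/2"
      by (rule riccati_stays_below_backward[of z1 z2 "\<eta> \<theta>" V "r/2"]) (use d\<eta> V_band True 2 in auto)
    then show ?thesis using 1(3) r by auto
  next
    case False
    have "\<eta> \<theta> z2 > 3*r/2"
      by (rule riccati_stays_above_backward[of z2 z1 "\<eta> \<theta>" V "3*r/2"]) (use d\<eta> V_band False 1 in auto)
    then show ?thesis using 2(3) r by auto
  qed
qed simp

lemma exists_not_escaping: "\<exists>\<theta>. \<theta> \<notin> escapes_above \<and> \<theta> \<notin> escapes_below"
proof (rule ccontr)
  assume "\<not> ?thesis"
  then have "{r/2..3*r/2} \<subseteq> escapes_above \<union> escapes_below" by blast
  from connectedD[OF connected_Icc open_escapes_above open_escapes_below _ this]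
  show False
    using escapes_above_below_disjoint upper_in_escapes_above lower_in_escapes_below r by auto
qed

lemma not_escaping_stays_in_band:
  assumes \<theta>: "\<theta> \<notin> escapes_above" "\<theta> \<notin> escapes_below" and "z \<le> z0"
  shows "W \<theta> z \<noteq> 0 \<and> r/2 \<le> \<eta> \<theta> z \<and> \<eta> \<theta> z \<le> 3*r/2"
proof (cases "\<exists>s\<in>{z..z0}. W \<theta> s = 0")
  case True
  \<comment> \<open>Just to the right of the last zero of \<open>W \<theta>\<close> the quotient \<open>\<eta> \<theta>\<close> is unbounded.\<close>
  have cont: "continuous_on {z..z0} (W \<theta>)"
    using DERIV_isCont[OF W_has_real_derivative] by (auto intro: continuous_at_imp_continuous_on)
  obtain s0 where "s0 \<in> {z..z0}" "W \<theta> s0 = 0" using True by blast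
  then obtain t where t: "t < z0" "W \<theta> t = 0" "\<And>s. t < s \<Longrightarrow> s \<le> z0 \<Longrightarrow> W \<theta> s \<noteq> 0"
    using last_zero_before[OF cont] W_initial[of \<theta>] by (metis zero_neq_one)
  have "W' \<theta> t \<noteq> 0" using W_W'_not_both_zero t(2) by auto
  then obtain s where s: "t < s" "s \<le> z0" "\<bar>W \<theta> s\<bar> * (3*r/2) < \<bar>W' \<theta> s\<bar>"
    using quotient_large_right_of_zero[where w="W \<theta>" and v="W' \<theta>" and t=t and y=z0 and M="3*r/2"] t r
      DERIV_isCont[OF W_has_real_derivative] DERIV_isCont[OF W'_has_real_derivative]
    by auto
  have "W \<theta> s \<noteq> 0" using t(3) s by auto
  then have "3*r/2 < \<bar>\<eta> \<theta> s\<bar>" using s(3) by (simp add: \<eta>_def abs_divide pos_less_divide_eq mult.commute)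
  moreover have "\<forall>x\<in>{s..z0}. W \<theta> x \<noteq> 0" using t(3) s by auto
  ultimately have "\<theta> \<in> escapes_above \<or> \<theta> \<in> escapes_below"
    using s(2) r unfolding escapes_above_def escapes_below_def
    by (auto simp: abs_less_iff not_less intro!: exI[of _ s])
  then show ?thesis using \<theta> by auto
next
  case False
  then have "\<forall>x\<in>{z..z0}. W \<theta> x \<noteq> 0" by auto
  then show ?thesis using \<theta> \<open>z \<le> z0\<close> unfolding escapes_above_def escapes_below_def by force
qed

end

lemma unstable_riccati_solution_exists:
  fixes V :: "real \<Rightarrow> real" and r :: real
  assumes V: "continuous_on UNIV V" and r: "r > 0" and Vlim: "(V \<longlongrightarrow> r^2) at_bot"
  shows "\<exists>w v. (\<forall>x. (w has_real_derivative v x) (at x)) \<and> (\<forall>x. (v has_real_derivative V x * w x) (at x))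
     \<and> (\<forall>x. w x \<noteq> 0 \<or> v x \<noteq> 0) \<and> (\<forall>\<^sub>F x in at_bot. w x \<noteq> 0) \<and> ((\<lambda>x. v x / w x) \<longlongrightarrow> r) at_bot"
proof -
  have "\<forall>\<^sub>F x in at_bot. dist (V x) (r^2) < r^2/2" using tendstoD[OF Vlim, of "r^2/2"] r by simp
  then obtain z0 where z0: "\<And>z. z \<le> z0 \<Longrightarrow> \<bar>V z - r^2\<bar> < r^2/2"
    by (auto simp: eventually_at_bot_linorder dist_real_def)
  have V_band: "(r/2)^2 < V z \<and> V z < (3*r/2)^2" if "z \<le> z0" for z
  proof -
    have "(r/2)^2 = r^2/4" "(3*r/2)^2 = 9*r^2/4" by (simp_all add: power2_eq_square)
    moreover have "V z - r^2 < r^2/2" "r^2 - V z < r^2/2" using z0[OF that] abs_less_iff[of "V z - r^2" "r^2/2"] by linarith+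
    moreover have "r^2 > 0" using r by simp
    ultimately show ?thesis by linarith
  qed
  obtain w1 v1 where s1: "w1 z0 = 1" "v1 z0 = 0" "\<And>x. (w1 has_real_derivative v1 x) (at x)"
      "\<And>x. (v1 has_real_derivative V x * w1 x) (at x)"
    using linear_ode2_exists[OF V, of z0 1 0] by blast
  obtain w2 v2 where s2: "w2 z0 = 0" "v2 z0 = 1" "\<And>x. (w2 has_real_derivative v2 x) (at x)"
      "\<And>x. (v2 has_real_derivative V x * w2 x) (at x)"
    using linear_ode2_exists[OF V, of z0 0 1] by blast
  interpret riccati_shooting V r z0 w1 v1 w2 v2
    using r V_band s1 s2 by unfold_locales auto
  obtain \<theta> where \<theta>: "\<theta> \<notin> escapes_above" "\<theta> \<notin> escapes_below" using exists_not_escaping by blast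
  note band = not_escaping_stays_in_band[OF \<theta>]
  have "(\<eta> \<theta> \<longlongrightarrow> r) at_bot"
    using band r Vlim by (intro riccati_tendsto_at_bot[of r V z0]) (auto intro: \<eta>_has_real_derivative)
  moreover have "\<forall>\<^sub>F x in at_bot. W \<theta> x \<noteq> 0"
    unfolding eventually_at_bot_linorder using band by blast
  ultimately show ?thesis
    using W_has_real_derivative W'_has_real_derivative W_W'_not_both_zero
    unfolding \<eta>_def by blast
qed

section \<open>The Riccati system at the double root\<close>

lemma decaying_potential_asymptotics_complex:
  fixes W W1 :: "real \<Rightarrow> complex" and V :: "real \<Rightarrow> real"
  assumes dW: "\<And>x. (W has_vector_derivative W1 x) (at x)"
    and dW1: "\<And>x. (W1 has_vector_derivative complex_of_real (V x) * W x) (at x)"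
    and K: "K \<ge> 0" and \<gamma>: "\<gamma> > 0" and Vb: "\<And>s. s \<ge> s0 \<Longrightarrow> \<bar>V s\<bar> \<le> K * exp (-\<gamma> * s)"
  shows "\<exists>A B. (W1 \<longlongrightarrow> B) at_top \<and> ((\<lambda>z. W z - B * complex_of_real z) \<longlongrightarrow> A) at_top \<and>
     (A = 0 \<and> B = 0 \<longrightarrow> (\<forall>\<^sub>F z in at_top. W z = 0 \<and> W1 z = 0))"
proof -
  have dRe: "((\<lambda>z. Re (W z)) has_real_derivative Re (W1 x)) (at x)"
    "((\<lambda>z. Re (W1 z)) has_real_derivative V x * Re (W x)) (at x)" for x
    using has_field_derivative_Re[OF dW] has_field_derivative_Re[OF dW1] by simp_all
  have dIm: "((\<lambda>z. Im (W z)) has_real_derivative Im (W1 x)) (at x)"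
    "((\<lambda>z. Im (W1 z)) has_real_derivative V x * Im (W x)) (at x)" for x
    using has_field_derivative_Im[OF dW] has_field_derivative_Im[OF dW1] by simp_all
  obtain AR BR where Re: "((\<lambda>z. Re (W1 z)) \<longlongrightarrow> BR) at_top" "((\<lambda>z. Re (W z) - BR * z) \<longlongrightarrow> AR) at_top"
      "AR = 0 \<and> BR = 0 \<longrightarrow> (\<forall>\<^sub>F z in at_top. Re (W z) = 0 \<and> Re (W1 z) = 0)"
    using decaying_potential_asymptotics[OF dRe K \<gamma> Vb] by blast
  obtain AI BI where Im: "((\<lambda>z. Im (W1 z)) \<longlongrightarrow> BI) at_top" "((\<lambda>z. Im (W z) - BI * z) \<longlongrightarrow> AI) at_top"
      "AI = 0 \<and> BI = 0 \<longrightarrow> (\<forall>\<^sub>F z in at_top. Im (W z) = 0 \<and> Im (W1 z) = 0)"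
    using decaying_potential_asymptotics[OF dIm K \<gamma> Vb] by blast
  show ?thesis
  proof (intro exI conjI impI)
    show "(W1 \<longlongrightarrow> Complex BR BI) at_top" using Re(1) Im(1) by (simp add: tendsto_complex_iff)
    show "((\<lambda>z. W z - Complex BR BI * complex_of_real z) \<longlongrightarrow> Complex AR AI) at_top"
      using Re(2) Im(2) by (simp add: tendsto_complex_iff)
    assume "Complex AR AI = 0 \<and> Complex BR BI = 0"
    then have "\<forall>\<^sub>F z in at_top. Re (W z) = 0 \<and> Re (W1 z) = 0"
      and "\<forall>\<^sub>F z in at_top. Im (W z) = 0 \<and> Im (W1 z) = 0"
      using Re(3) Im(3) by (auto simp: complex_eq_iff)
    then show "\<forall>\<^sub>F z in at_top. W z = 0 \<and> W1 z = 0"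
      by eventually_elim (simp add: complex_eq_iff)
  qed
qed

lemma quotient_tendsto_0_of_affine_asymptotics:
  fixes W W1 :: "real \<Rightarrow> complex"
  assumes LB: "(W1 \<longlongrightarrow> B) at_top" and LA: "((\<lambda>z. W z - B * complex_of_real z) \<longlongrightarrow> A) at_top"
    and AB: "A \<noteq> 0 \<or> B \<noteq> 0"
  shows "(\<forall>\<^sub>F z in at_top. W z \<noteq> 0) \<and> ((\<lambda>z. W1 z / W z) \<longlongrightarrow> 0) at_top"
proof (cases "B = 0")
  case True
  then have LW: "(W \<longlongrightarrow> A) at_top" "A \<noteq> 0" using LA AB by simp_all
  have "((\<lambda>z. W1 z / W z) \<longlongrightarrow> B / A) at_top" by (intro tendsto_intros LB LW)
  then show ?thesis using tendsto_imp_eventually_ne[OF LW] True by simp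
next
  case False
  have inv: "((\<lambda>z. 1 / complex_of_real z) \<longlongrightarrow> 0) at_top"
  proof -
    have "((\<lambda>z. complex_of_real (1 / z)) \<longlongrightarrow> complex_of_real 0) at_top"
      by (intro tendsto_of_real) real_asymp
    then show ?thesis by simp
  qed
  have "((\<lambda>z. (W z - B * complex_of_real z) * (1 / complex_of_real z) + B) \<longlongrightarrow> B) at_top"
    using tendsto_add[OF tendsto_mult[OF LA inv] tendsto_const[of B]] by simp
  moreover have "\<forall>\<^sub>F z in at_top. (W z - B * complex_of_real z) * (1 / complex_of_real z) + B = W z / complex_of_real z"
    using eventually_gt_at_top[of 0] by eventually_elim (simp add: field_simps)
  ultimately have Wz: "((\<lambda>z. W z / complex_of_real z) \<longlongrightarrow> B) at_top"
    by (rule tendsto_cong[THEN iffD1, rotated])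
  have "\<forall>\<^sub>F z in at_top. W z / complex_of_real z \<noteq> 0" using tendsto_imp_eventually_ne[OF Wz False] .
  then have evW: "\<forall>\<^sub>F z in at_top. W z \<noteq> 0" by eventually_elim auto
  have "((\<lambda>z. (W1 z * (1 / complex_of_real z)) / (W z / complex_of_real z)) \<longlongrightarrow> 0) at_top"
    using tendsto_divide[OF tendsto_mult[OF LB inv] Wz False] by simp
  moreover have "\<forall>\<^sub>F z in at_top. (W1 z * (1 / complex_of_real z)) / (W z / complex_of_real z) = W1 z / W z"
    using eventually_gt_at_top[of 0] by eventually_elim (simp add: field_simps)
  ultimately have "((\<lambda>z. W1 z / W z) \<longlongrightarrow> 0) at_top" by (rule tendsto_cong[THEN iffD1, rotated])
  then show ?thesis using evW by blast
qed

lemma riccati_coefficients_at_double_root: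
  assumes "\<delta> > 0"
  shows "(complex_of_real (1 - c\<^sup>2 / (4 * \<delta>)) - 1 + complex_of_real (2 * y)) / complex_of_real \<delta>
      = complex_of_real (2 * y / \<delta> - (c / (2 * \<delta>))^2)"
    and "complex_of_real (c / \<delta>) = complex_of_real (2 * (c / (2 * \<delta>)))"
  using assms by (simp_all add: field_simps power2_eq_square)

lemma riccati_solution_remove_damping:
  fixes p q :: "real \<Rightarrow> complex" and c \<delta> :: real
  assumes \<delta>: "\<delta> > 0" and ric: "riccati_solution \<delta> c u (complex_of_real (1 - c\<^sup>2 / (4 * \<delta>))) p q"
  defines "k \<equiv> c / (2 * \<delta>)"
  shows "((\<lambda>z. complex_of_real (exp (k*z)) * p z) has_vector_derivative
           complex_of_real (exp (k*x)) * (complex_of_real k * p x + q x)) (at x)"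
    and "((\<lambda>z. complex_of_real (exp (k*z)) * (complex_of_real k * p z + q z)) has_vector_derivative
           complex_of_real (2 * u x / \<delta>) * (complex_of_real (exp (k*x)) * p x)) (at x)"
proof -
  have dp: "\<And>z. (p has_vector_derivative q z) (at z)"
    and dq: "\<And>z. (q has_vector_derivative
       complex_of_real (2 * u z / \<delta> - k^2) * p z - complex_of_real (2 * k) * q z) (at z)"
    using ric unfolding riccati_solution_def riccati_coefficients_at_double_root[OF \<delta>] k_def by blast+
  have "((\<lambda>z. exp (k*z)) has_real_derivative exp (k*x) * k) (at x)" by (auto intro!: derivative_eq_intros)
  from has_vector_derivative_of_real[OF this]
  have dexp: "((\<lambda>z. complex_of_real (exp (k*z))) has_vector_derivative
      complex_of_real (exp (k*x)) * complex_of_real k) (at x)"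
    by (simp only: of_real_mult)
  show "((\<lambda>z. complex_of_real (exp (k*z)) * p z) has_vector_derivative
      complex_of_real (exp (k*x)) * (complex_of_real k * p x + q x)) (at x)"
    using has_vector_derivative_mult[OF dexp dp] by (simp add: algebra_simps)
  have "((\<lambda>z. complex_of_real k * p z + q z) has_vector_derivative
      complex_of_real k * q x + (complex_of_real (2 * u x / \<delta> - k^2) * p x - complex_of_real (2 * k) * q x)) (at x)"
    by (rule has_vector_derivative_add[OF has_vector_derivative_mult_right[OF dp] dq])
  from has_vector_derivative_mult[OF dexp this]
  show "((\<lambda>z. complex_of_real (exp (k*z)) * (complex_of_real k * p z + q z)) has_vector_derivative
      complex_of_real (2 * u x / \<delta>) * (complex_of_real (exp (k*x)) * p x)) (at x)"
    by (simp add: algebra_simps power2_eq_square)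
qed

lemma riccati_solution_add_damping:
  fixes W W1 :: "real \<Rightarrow> complex" and c \<delta> :: real
  assumes \<delta>: "\<delta> > 0"
    and dW: "\<And>x. (W has_vector_derivative W1 x) (at x)"
    and dW1: "\<And>x. (W1 has_vector_derivative complex_of_real (2 * u x / \<delta>) * W x) (at x)"
    and nz: "\<And>x. W x \<noteq> 0 \<or> W1 x \<noteq> 0"
  defines "k \<equiv> c / (2 * \<delta>)"
  shows "riccati_solution \<delta> c u (complex_of_real (1 - c\<^sup>2 / (4 * \<delta>)))
    (\<lambda>z. complex_of_real (exp (-k*z)) * W z)
    (\<lambda>z. complex_of_real (exp (-k*z)) * (W1 z - complex_of_real k * W z))"
  unfolding riccati_solution_def riccati_coefficients_at_double_root[OF \<delta>] k_def[symmetric]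
proof (intro conjI allI)
  fix z
  have "((\<lambda>z. exp (-k*z)) has_real_derivative exp (-k*z) * (-k)) (at z)"
    by (auto intro!: derivative_eq_intros)
  from has_vector_derivative_of_real[OF this]
  have dexp: "((\<lambda>z. complex_of_real (exp (-k*z))) has_vector_derivative
      complex_of_real (exp (-k*z)) * complex_of_real (-k)) (at z)"
    by (simp only: of_real_mult)
  show "((\<lambda>z. complex_of_real (exp (-k*z)) * W z) has_vector_derivative
      complex_of_real (exp (-k*z)) * (W1 z - complex_of_real k * W z)) (at z)"
    using has_vector_derivative_mult[OF dexp dW] by (simp add: algebra_simps)
  have "((\<lambda>z. W1 z - complex_of_real k * W z) has_vector_derivative
      complex_of_real (2 * u z / \<delta>) * W z - complex_of_real k * W1 z) (at z)"
    by (rule has_vector_derivative_diff[OF dW1 has_vector_derivative_mult_right[OF dW]])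
  from has_vector_derivative_mult[OF dexp this]
  show "((\<lambda>z. complex_of_real (exp (-k*z)) * (W1 z - complex_of_real k * W z)) has_vector_derivative
      complex_of_real (2 * u z / \<delta> - k^2) * (complex_of_real (exp (-k*z)) * W z)
      - complex_of_real (2 * k) * (complex_of_real (exp (-k*z)) * (W1 z - complex_of_real k * W z))) (at z)"
    by (simp add: algebra_simps power2_eq_square)
  show "complex_of_real (exp (-k*z)) * W z \<noteq> 0 \<or>
      complex_of_real (exp (-k*z)) * (W1 z - complex_of_real k * W z) \<noteq> 0"
    using nz[of z] by auto
qed

lemma riccati_solution_tendsto_double_root_at_top:
  fixes p q :: "real \<Rightarrow> complex"
  assumes \<delta>: "\<delta> > 0" and ric: "riccati_solution \<delta> c u (complex_of_real (1 - c\<^sup>2 / (4 * \<delta>))) p q"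
    and K: "K \<ge> 0" and \<gamma>: "\<gamma> > 0" and decay: "\<And>s. s \<ge> s0 \<Longrightarrow> \<bar>2 * u s / \<delta>\<bar> \<le> K * exp (-\<gamma> * s)"
  shows "proj_tendsto p q (complex_of_real (- (c / (2 * \<delta>)))) at_top"
proof -
  define k where "k = c / (2 * \<delta>)"
  define W where "W z = complex_of_real (exp (k*z)) * p z" for z
  define W1 where "W1 z = complex_of_real (exp (k*z)) * (complex_of_real k * p z + q z)" for z
  obtain A B where B: "(W1 \<longlongrightarrow> B) at_top" and A: "((\<lambda>z. W z - B * complex_of_real z) \<longlongrightarrow> A) at_top"
      and vanish: "A = 0 \<and> B = 0 \<longrightarrow> (\<forall>\<^sub>F z in at_top. W z = 0 \<and> W1 z = 0)"
    using decaying_potential_asymptotics_complex[OF _ _ K \<gamma> decay, of W W1]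
      riccati_solution_remove_damping[OF \<delta> ric] unfolding W_def W1_def k_def by blast
  have "A \<noteq> 0 \<or> B \<noteq> 0"
  proof (rule ccontr)
    assume "\<not> (A \<noteq> 0 \<or> B \<noteq> 0)"
    then obtain z where "W z = 0" "W1 z = 0" using vanish eventually_happens[of _ at_top] by force
    then show False using ric by (auto simp: W_def W1_def riccati_solution_def)
  qed
  from quotient_tendsto_0_of_affine_asymptotics[OF B A this]
  have evW: "\<forall>\<^sub>F z in at_top. W z \<noteq> 0" and lim: "((\<lambda>z. W1 z / W z) \<longlongrightarrow> 0) at_top" by auto
  have "((\<lambda>z. W1 z / W z - complex_of_real k) \<longlongrightarrow> complex_of_real (- k)) at_top"
    using tendsto_diff[OF lim tendsto_const] by simp
  moreover have "\<forall>\<^sub>F z in at_top. W1 z / W z - complex_of_real k = q z / p z"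
    using evW by eventually_elim (simp add: W_def W1_def field_simps)
  ultimately have "((\<lambda>z. q z / p z) \<longlongrightarrow> complex_of_real (- k)) at_top"
    by (rule tendsto_cong[THEN iffD1, rotated])
  moreover have "\<forall>\<^sub>F z in at_top. p z \<noteq> 0" using evW by eventually_elim (simp add: W_def)
  ultimately show ?thesis by (simp add: proj_tendsto_def k_def)
qed

lemma unstable_riccati_solution_at_double_root:
  assumes \<delta>: "\<delta> > 0" and cu: "continuous_on UNIV u" and ubot: "(u \<longlongrightarrow> 1) at_bot"
  shows "\<exists>p q. riccati_solution \<delta> c u (complex_of_real (1 - c\<^sup>2 / (4 * \<delta>))) p q
    \<and> proj_tendsto p q (complex_of_real (sqrt (2 / \<delta>) - c / (2 * \<delta>))) at_bot"
proof -
  define r where "r = sqrt (2 / \<delta>)"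
  define k where "k = c / (2 * \<delta>)"
  have r: "r > 0" "r^2 = 2 / \<delta>" using \<delta> by (simp_all add: r_def)
  have "continuous_on UNIV (\<lambda>z. 2 * u z / \<delta>)" using cu \<delta> by (intro continuous_intros) auto
  moreover have "((\<lambda>z. 2 * u z / \<delta>) \<longlongrightarrow> r^2) at_bot"
    using tendsto_divide[OF tendsto_mult[OF tendsto_const[of 2] ubot] tendsto_const[of \<delta>]] \<delta> r(2) by simp
  ultimately obtain w v where w: "\<And>x. (w has_real_derivative v x) (at x)"
      and v: "\<And>x. (v has_real_derivative 2 * u x / \<delta> * w x) (at x)"
      and nz: "\<And>x. w x \<noteq> 0 \<or> v x \<noteq> 0" and evw: "\<forall>\<^sub>F x in at_bot. w x \<noteq> 0"
      and lim: "((\<lambda>x. v x / w x) \<longlongrightarrow> r) at_bot"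
    using unstable_riccati_solution_exists[OF _ r(1)] by blast
  define p where "p z = complex_of_real (exp (-k*z)) * complex_of_real (w z)" for z
  define q where "q z = complex_of_real (exp (-k*z)) * (complex_of_real (v z) - complex_of_real k * complex_of_real (w z))" for z
  have dW: "((\<lambda>z. complex_of_real (w z)) has_vector_derivative complex_of_real (v x)) (at x)" for x
    using has_vector_derivative_of_real[OF w] .
  have dW1: "((\<lambda>z. complex_of_real (v z)) has_vector_derivative
      complex_of_real (2 * u x / \<delta>) * complex_of_real (w x)) (at x)" for x
    using has_vector_derivative_of_real[OF v] by (simp only: of_real_mult)
  have "riccati_solution \<delta> c u (complex_of_real (1 - c\<^sup>2 / (4 * \<delta>))) p q"
    unfolding p_def q_def k_def using nz by (intro riccati_solution_add_damping[OF \<delta> dW dW1]) auto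
  moreover have "proj_tendsto p q (complex_of_real (r - k)) at_bot"
    unfolding proj_tendsto_def
  proof
    show "\<forall>\<^sub>F z in at_bot. p z \<noteq> 0" using evw by eventually_elim (simp add: p_def)
    have "((\<lambda>x. complex_of_real (v x / w x - k)) \<longlongrightarrow> complex_of_real (r - k)) at_bot"
      by (intro tendsto_of_real tendsto_diff lim tendsto_const)
    moreover have "\<forall>\<^sub>F z in at_bot. complex_of_real (v z / w z - k) = q z / p z"
      using evw by eventually_elim (simp add: p_def q_def field_simps)
    ultimately show "((\<lambda>z. q z / p z) \<longlongrightarrow> complex_of_real (r - k)) at_bot"
      by (rule tendsto_cong[THEN iffD1, rotated])
  qed
  ultimately show ?thesis unfolding r_def k_def by blast
qed

lemma double_root_exponents:
  fixes \<delta> c :: real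
  assumes \<delta>: "\<delta> > 0"
  shows "mu_s_plus \<delta> c (complex_of_real (1 - c\<^sup>2 / (4 * \<delta>))) = - c / (2 * \<delta>)"
    and "mu_u_plus \<delta> c (complex_of_real (1 - c\<^sup>2 / (4 * \<delta>))) = - c / (2 * \<delta>)"
    and "mu_u_minus \<delta> c (complex_of_real (1 - c\<^sup>2 / (4 * \<delta>)))
      = complex_of_real (sqrt (2 / \<delta>) - c / (2 * \<delta>))"
proof -
  have "c^2 + 4 * \<delta> * ((1 - c\<^sup>2 / (4 * \<delta>)) - 1) = 0" using \<delta> by (simp add: field_simps)
  then have "complex_of_real (c^2 + 4 * \<delta> * ((1 - c\<^sup>2 / (4 * \<delta>)) - 1)) = 0" by (simp only: of_real_0)
  then have double: "(complex_of_real c)^2 + 4 * complex_of_real \<delta> * (complex_of_real (1 - c\<^sup>2 / (4 * \<delta>)) - 1) = 0"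
    by (simp only: of_real_add of_real_mult of_real_power of_real_diff of_real_1 of_real_numeral)
  then show "mu_s_plus \<delta> c (complex_of_real (1 - c\<^sup>2 / (4 * \<delta>))) = - c / (2 * \<delta>)"
    and "mu_u_plus \<delta> c (complex_of_real (1 - c\<^sup>2 / (4 * \<delta>))) = - c / (2 * \<delta>)"
    unfolding mu_s_plus_def mu_u_plus_def double by simp_all
  have "c^2 + 4 * \<delta> * ((1 - c\<^sup>2 / (4 * \<delta>)) + 1) = (2 * \<delta>)^2 * (2 / \<delta>)"
    using \<delta> by (simp add: field_simps power2_eq_square)
  then have "complex_of_real (c^2 + 4 * \<delta> * ((1 - c\<^sup>2 / (4 * \<delta>)) + 1))
      = complex_of_real ((2 * \<delta> * sqrt (2 / \<delta>))^2)"
    using \<delta> by (simp only: power_mult_distrib real_sqrt_pow2) simp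
  then have arg: "(complex_of_real c)^2 + 4 * complex_of_real \<delta> * (complex_of_real (1 - c\<^sup>2 / (4 * \<delta>)) + 1)
      = (complex_of_real (2 * \<delta> * sqrt (2 / \<delta>)))^2"
    by (simp only: of_real_add of_real_mult of_real_power of_real_diff of_real_1 of_real_numeral)
  have "csqrt ((complex_of_real (2 * \<delta> * sqrt (2 / \<delta>)))^2) = complex_of_real (2 * \<delta> * sqrt (2 / \<delta>))"
    using \<delta> by (intro csqrt_unique) auto
  then show "mu_u_minus \<delta> c (complex_of_real (1 - c\<^sup>2 / (4 * \<delta>)))
      = complex_of_real (sqrt (2 / \<delta>) - c / (2 * \<delta>))"
    unfolding mu_u_minus_def arg using \<delta> by (simp add: field_simps)
qed

lemma double_root_lambda_nonneg:
  fixes \<delta> c :: real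
  assumes "\<delta> > 0" and "0 < c" and "c \<le> 2 * sqrt \<delta>"
  shows "1 - c\<^sup>2 / (4 * \<delta>) \<ge> 0" and "c < 2 * sqrt \<delta> \<Longrightarrow> 1 - c\<^sup>2 / (4 * \<delta>) > 0"
proof -
  have sq: "(2 * sqrt \<delta>)^2 = 4 * \<delta>" using assms(1) by (simp add: power_mult_distrib)
  have "c\<^sup>2 \<le> (2 * sqrt \<delta>)^2" using assms(2,3) by (intro power_mono) auto
  then have "c\<^sup>2 \<le> 4 * \<delta>" using sq by simp
  then show "1 - c\<^sup>2 / (4 * \<delta>) \<ge> 0" using assms(1) by (simp add: field_simps)
  assume "c < 2 * sqrt \<delta>"
  then have "c\<^sup>2 < (2 * sqrt \<delta>)^2" using assms(2) by (intro power_strict_mono) auto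
  then have "c\<^sup>2 < 4 * \<delta>" using sq by simp
  then show "1 - c\<^sup>2 / (4 * \<delta>) > 0" using assms(1) by (simp add: field_simps)
qed

theorem mainTheorem6:
  fixes \<delta> c :: real and u :: "real \<Rightarrow> real"
  assumes "\<delta> > 0" and "0 < c" and "c \<le> 2 * sqrt \<delta>"
    and "travelling_wave \<delta> c u"
  defines "lamt \<equiv> 1 - c\<^sup>2 / (4 * \<delta>)"
  shows "lamt \<ge> 0
    \<and> mu_s_plus \<delta> c (complex_of_real lamt) = - c / (2 * \<delta>)
    \<and> mu_u_plus \<delta> c (complex_of_real lamt) = - c / (2 * \<delta>)
    \<and> eigenvalue_ext \<delta> c u (complex_of_real lamt)
    \<and> (\<forall>p q. riccati_solution \<delta> c u (complex_of_real lamt) p q \<and>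
             proj_tendsto p q (mu_u_minus \<delta> c (complex_of_real lamt)) at_bot \<longrightarrow>
             proj_tendsto p q (mu_s_plus \<delta> c (complex_of_real lamt)) at_top)
    \<and> (c < 2 * sqrt \<delta> \<longrightarrow> lamt > 0)"
proof -
  note \<delta> = assms(1)
  obtain du where du: "\<And>z. (u has_real_derivative du z) (at z)"
    and ddu: "\<And>z. (du has_real_derivative (- (c * du z + u z * (1 - u z)) / \<delta>)) (at z)"
    and ubot: "(u \<longlongrightarrow> 1) at_bot" and utop: "(u \<longlongrightarrow> 0) at_top"
    using assms(4) unfolding travelling_wave_def by blast
  obtain K \<gamma> s0 where K: "K \<ge> 0" and \<gamma>: "\<gamma> > 0" and decay: "\<And>s. s \<ge> s0 \<Longrightarrow> \<bar>u s\<bar> \<le> K * exp (-\<gamma> * s)"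
    using travelling_wave_exp_decay[OF \<delta> assms(2) du ddu utop] by blast
  have "\<bar>2 * u s / \<delta>\<bar> \<le> (2 * K / \<delta>) * exp (-\<gamma> * s)" if "s \<ge> s0" for s
    using decay[OF that] \<delta> by (simp add: abs_mult field_simps)
  then have top: "proj_tendsto p q (mu_s_plus \<delta> c (complex_of_real lamt)) at_top"
    if "riccati_solution \<delta> c u (complex_of_real lamt) p q" for p q
    using riccati_solution_tendsto_double_root_at_top[OF \<delta> that[unfolded lamt_def], of "2 * K / \<delta>" \<gamma> s0]
      K \<gamma> \<delta> double_root_exponents(1)[OF \<delta>] unfolding lamt_def by simp
  have "continuous_on UNIV u" using du by (meson DERIV_isCont continuous_at_imp_continuous_on)
  then obtain p q where "riccati_solution \<delta> c u (complex_of_real lamt) p q"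
      "proj_tendsto p q (mu_u_minus \<delta> c (complex_of_real lamt)) at_bot"
    using unstable_riccati_solution_at_double_root[OF \<delta> _ ubot, of c]
    unfolding lamt_def double_root_exponents(3)[OF \<delta>] by blast
  then have "eigenvalue_ext \<delta> c u (complex_of_real lamt)"
    using top double_root_lambda_nonneg(1)[OF assms(1-3)] unfolding eigenvalue_ext_def lamt_def by auto
  then show ?thesis
    using top double_root_exponents(1,2)[OF \<delta>] double_root_lambda_nonneg[OF assms(1-3)]
    unfolding lamt_def by auto
qed

end
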